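(* Let $2<p<N$, let $G=(V,E,w)$ satisfy the standing assumptions and the Sobolev inequality (S), and let $\rho$ be the density as below. Set $\lambda=N(p-2)+p$ and suppose that for some $\nu>0$ (taken sufficiently large) $$\sum_{x\in V}\rho(x)^{N(p-1+\nu)/(\lambda+p\nu)}\,m(x)<\infty.$$ Let $u\ge0$ be a solution of $\rho(x)\partial_tu(x,t)-\Delta_pu(x,t)=0$ in $V\times(0,T)$ for every $T>0$. Then for all $t>0$ $$\|u(t)\|_\infty=\sup_{x\in V}|u(x,t)|\le C\,t^{-1/(p-2)},$$ where $C$ is independent of the initial datum $u(\cdot,0)$.
   Context: Standing setting: $G=(V,E,w)$ is a simple, undirected, infinite, connected graph; $w$ symmetric, $w(x,x)=0$, $w(x,y)>0$ iff $x\sim y$; $m(x)=\sum_{y\sim x}w(x,y)$ is bounded above and $\inf_x m(x)>0$. Fix $x_0\in V$, $d(x)$ the combinatorial distance to $x_0$. $\Delta_p u(x)=\frac{1}{m(x)}\sum_{y\in V}|u(y)-u(x)|^{p-2}(u(y)-u(x))w(x,y)$. The density is $\rho(x)=\rho(d(x))$ with $\rho$ positive, nonincreasing, $\rho\le1$. (S) Sobolev inequality: with $p^*=Np/(N-p)$, there is $C$ such that for every finite $U\subset V$ and every $f:V\to\mathbb R$ vanishing outside $U$, $\big(\sum_{x\in U}|f(x)|^{p^*}m(x)\big)^{1/p^*}\le C\big(\sum_{x,y\in U}|f(y)-f(x)|^pw(x,y)\big)^{1/p}$. A solution is a function $u\in L^\infty(0,T;\ell^r(V))$ for some $r\ge1$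 such that $t\mapsto u(x,t)$ is $C^1$ on $[0,T]$ for every $x$ and the equation holds pointwise. *)

theory Defs
  imports "HOL-Analysis.Analysis"
begin

definition edges :: "('v \<Rightarrow> 'v \<Rightarrow> real) \<Rightarrow> ('v \<times> 'v) set" where
  "edges w = {(x, y). w x y > 0}"

definition weighted_graph :: "('v \<Rightarrow> 'v \<Rightarrow> real) \<Rightarrow> bool" where
  "weighted_graph w \<longleftrightarrow>
     infinite (UNIV :: 'v set) \<and>
     (\<forall>x y. w x y = w y x) \<and> (\<forall>x. w x x = 0) \<and> (\<forall>x y. w x y \<ge> 0) \<and>
     (\<forall>x y. (x, y) \<in> (edges w)\<^sup>*) \<and>
     (\<forall>x. w x summable_on UNIV)"

definition vmeas :: "('v \<Rightarrow> 'v \<Rightarrow> real) \<Rightarrow> 'v \<Rightarrow> real" where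
  "vmeas w x = (\<Sum>\<^sub>\<infinity>y. w x y)"

definition gdist :: "('v \<Rightarrow> 'v \<Rightarrow> real) \<Rightarrow> 'v \<Rightarrow> 'v \<Rightarrow> nat" where
  "gdist w x0 x = (LEAST n. (x0, x) \<in> (edges w) ^^ n)"

definition plap :: "('v \<Rightarrow> 'v \<Rightarrow> real) \<Rightarrow> real \<Rightarrow> ('v \<Rightarrow> real) \<Rightarrow> 'v \<Rightarrow> real" where
  "plap w p f x = (1 / vmeas w x) *
     (\<Sum>\<^sub>\<infinity>y. \<bar>f y - f x\<bar> powr (p - 2) * (f y - f x) * w x y)"

definition sobolev :: "('v \<Rightarrow> 'v \<Rightarrow> real) \<Rightarrow> real \<Rightarrow> real \<Rightarrow> bool" where
  "sobolev w N p \<longleftrightarrow> (\<exists>C. \<forall>(U :: 'v set) (f :: 'v \<Rightarrow> real).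
     finite U \<longrightarrow> (\<forall>x. x \<notin> U \<longrightarrow> f x = 0) \<longrightarrow>
     (\<Sum>x\<in>U. \<bar>f x\<bar> powr (N * p / (N - p)) * vmeas w x) powr (1 / (N * p / (N - p)))
       \<le> C * (\<Sum>\<^sub>\<infinity>(x, y). \<bar>f y - f x\<bar> powr p * w x y) powr (1 / p))"

text \<open>Solution of rho(x) d_t u - Delta_p u = 0 in V x (0,T): u in L^infty(0,T; l^r(V)) for some
  r >= 1 (l^r w.r.t. the measure m), t -> u(x,t) C^1 on [0,T] for every x, equation pointwise.\<close>
definition is_solution ::
  "('v \<Rightarrow> 'v \<Rightarrow> real) \<Rightarrow> real \<Rightarrow> ('v \<Rightarrow> real) \<Rightarrow> ('v \<Rightarrow> real \<Rightarrow> real) \<Rightarrow> real \<Rightarrow> bool" where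
  "is_solution w p rho u T \<longleftrightarrow>
     (\<exists>r \<ge> 1. \<exists>M. \<forall>t \<in> {0..T}.
        (\<lambda>x. \<bar>u x t\<bar> powr r * vmeas w x) summable_on UNIV \<and>
        (\<Sum>\<^sub>\<infinity>x. \<bar>u x t\<bar> powr r * vmeas w x) \<le> M) \<and>
     (\<forall>x. \<exists>u'. continuous_on {0..T} u' \<and>
        (\<forall>t \<in> {0..T}. ((\<lambda>s. u x s) has_real_derivative u' t) (at t within {0..T})) \<and>
        (\<forall>t \<in> {0<..<T}. rho x * u' t - plap w p (\<lambda>y. u y t) x = 0))"

end

theory Submission
  imports Defs
begin

text \<open>
  For a level \<open>L > 0\<close> and the test exponent \<open>k = \<nu> + 1\<close> consider the energy
  \<open>E_L(t) = \<Sum>_x \<rho>(x) m(x) (u(x,t) - L)_+^k\<close> of the part of \<open>u\<close> above \<open>L\<close>. Testing the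
  equation with \<open>k (u - L)_+^(k-1)\<close> and summing by parts on the graph shows that \<open>E_L\<close> decreases
  at least at the rate \<open>c \<parallel>\<nabla>(u - L)_+^\<gamma>\<parallel>_p^p\<close>, where \<open>\<gamma> = (k + p - 2)/p\<close>. Hoelder's inequality
  against the summable weight \<open>\<rho>^e m\<close> and the Sobolev inequality bound \<open>E_L^\<alpha>\<close>, with
  \<open>\<alpha> = (k + p - 2)/k > 1\<close>, by a multiple of this rate, so \<open>E_L(t/2) \<le> c' t^(-k/(p-2))\<close> independently
  of the initial datum. Hence the rate is at most of order \<open>t^(-k/(p-2)-1)\<close> at some time
  \<open>\<tau> \<in> (t/2, t]\<close>, and the Sobolev inequality together with \<open>inf m > 0\<close> turns this into the pointwise
  bound \<open>u(\<cdot>,\<tau>) \<le> L + C t^(-1/(p-2))\<close>. As every \<open>E_L\<close> is nonincreasing, the bound persists up to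
  time \<open>t\<close>, and \<open>L \<rightarrow> 0\<close> gives the theorem.

  The energy need not be differentiable, since points enter and leave the superlevel set, but the
  equation controls its left difference quotients; hence the comparison arguments are phrased with
  left Dini derivatives.
\<close>

lemma powr_eq_powr_diff_one_mult:
  fixes x b :: real
  assumes "0 \<le> x"
  shows "x powr b = x powr (b - 1) * x"
  using powr_mult_base[OF assms, of "b - 1"] by (simp add: mult.commute)

lemma abs_powr_mult_self: "\<bar>\<bar>z\<bar> powr (p - 2) * z\<bar> = \<bar>z\<bar> powr (p - 1)" for z p :: real
  using powr_eq_powr_diff_one_mult[of "\<bar>z\<bar>" "p - 1"] by (simp add: abs_mult)

lemma power_difference_inequality_lt:
  fixes A B k p :: real
  assumes "0 < A" "A < B" "2 \<le> k" "0 < p"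
  defines "\<gamma> \<equiv> (k + p - 2) / p"
  shows "k / \<gamma> powr p * \<bar>B powr \<gamma> - A powr \<gamma>\<bar> powr p \<le>
    (k * B powr (k - 1) - k * A powr (k - 1)) * (\<bar>B - A\<bar> powr (p - 2) * (B - A))"
proof -
  have "1 \<le> \<gamma>" "(\<gamma> - 1) * p = k - 2"
    unfolding \<gamma>_def using assms(3,4) by (simp_all add: field_simps)
  have "((\<lambda>x. x powr \<gamma>) has_real_derivative \<gamma> * x powr (\<gamma> - 1)) (at x)" if "A \<le> x" for x
    using that \<open>0 < A\<close> by (auto intro!: derivative_eq_intros)
  then obtain z where z: "A < z" "z < B" "B powr \<gamma> - A powr \<gamma> = (B - A) * (\<gamma> * z powr (\<gamma> - 1))"
    using MVT2[OF \<open>A < B\<close>, of "\<lambda>x. x powr \<gamma>" "\<lambda>x. \<gamma> * x powr (\<gamma> - 1)"] by blast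
  have "z powr (\<gamma> - 1) \<le> B powr (\<gamma> - 1)"
    using z \<open>0 < A\<close> \<open>1 \<le> \<gamma>\<close> by (intro powr_mono2) auto
  then have "(B - A) * (\<gamma> * z powr (\<gamma> - 1)) \<le> (B - A) * (\<gamma> * B powr (\<gamma> - 1))"
    using \<open>A < B\<close> \<open>1 \<le> \<gamma>\<close> by (intro mult_left_mono) auto
  then have tangent: "B powr \<gamma> - A powr \<gamma> \<le> \<gamma> * B powr (\<gamma> - 1) * (B - A)"
    unfolding z(3) by (simp add: algebra_simps)
  have "A powr \<gamma> \<le> B powr \<gamma>"
    using assms(1,2) \<open>1 \<le> \<gamma>\<close> by (intro powr_mono2) auto
  have "A powr (k - 2) \<le> B powr (k - 2)"
    using assms(1-3) by (intro powr_mono2) auto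
  then have gap: "B powr (k - 2) * (B - A) \<le> B powr (k - 1) - A powr (k - 1)"
    using powr_eq_powr_diff_one_mult[of A "k - 1"] powr_eq_powr_diff_one_mult[of B "k - 1"] assms(1,2)
    by (simp add: algebra_simps mult_right_mono)
  have "k / \<gamma> powr p * \<bar>B powr \<gamma> - A powr \<gamma>\<bar> powr p \<le> k / \<gamma> powr p * (\<gamma> * B powr (\<gamma> - 1) * (B - A)) powr p"
    using tangent \<open>A powr \<gamma> \<le> B powr \<gamma>\<close> assms(3,4) by (intro mult_left_mono powr_mono2) auto
  also have "\<dots> = k * B powr (k - 2) * (B - A) powr p"
    using \<open>1 \<le> \<gamma>\<close> \<open>(\<gamma> - 1) * p = k - 2\<close> assms(1,2) by (simp add: powr_mult powr_powr)
  also have "\<dots> = k * (B powr (k - 2) * (B - A)) * (B - A) powr (p - 1)"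
    using powr_eq_powr_diff_one_mult[of "B - A" p] assms(2) by simp
  also have "\<dots> \<le> k * (B powr (k - 1) - A powr (k - 1)) * (B - A) powr (p - 1)"
    using gap assms(3) by (intro mult_right_mono mult_left_mono) auto
  also have "\<dots> = (k * B powr (k - 1) - k * A powr (k - 1)) * (\<bar>B - A\<bar> powr (p - 2) * (B - A))"
  proof -
    have split: "(B - A) powr (p - 1) = (B - A) powr (p - 2) * (B - A)"
      using powr_eq_powr_diff_one_mult[of "B - A" "p - 1"] assms(2) by simp
    show ?thesis
      unfolding split using assms(2) by (simp add: algebra_simps)
  qed
  finally show ?thesis .
qed

lemma power_difference_inequality:
  fixes A B k p :: real
  assumes "0 < A" "0 < B" "2 \<le> k" "0 < p"
  defines "\<gamma> \<equiv> (k + p - 2) / p"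
  shows "k / \<gamma> powr p * \<bar>B powr \<gamma> - A powr \<gamma>\<bar> powr p \<le>
    (k * B powr (k - 1) - k * A powr (k - 1)) * (\<bar>B - A\<bar> powr (p - 2) * (B - A))"
proof (cases A B rule: linorder_cases)
  case less
  then show ?thesis
    using power_difference_inequality_lt[OF \<open>0 < A\<close> less assms(3,4)] by (simp add: \<gamma>_def)
next
  case equal
  then show ?thesis
    by simp
next
  case greater
  then show ?thesis
    using power_difference_inequality_lt[OF \<open>0 < B\<close> greater assms(3,4)] unfolding \<gamma>_def
    by (simp add: abs_minus_commute algebra_simps)
qed

lemma boundary_pair_inequality:
  fixes a b \<epsilon> k p c :: real
  assumes "b \<le> \<epsilon>" "\<epsilon> < a" "1 \<le> k" "1 \<le> p" "0 \<le> c"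
  defines "v \<equiv> \<lambda>z. max (z - \<epsilon>) 0" and "\<gamma> \<equiv> (k + p - 2) / p"
  shows "k * v a powr (k - 1) * (\<bar>b - a\<bar> powr (p - 2) * (b - a) * c)
    \<le> - k * (\<bar>v b powr \<gamma> - v a powr \<gamma>\<bar> powr p * c)"
proof -
  have "(a - \<epsilon>) powr (p - 1) \<le> (a - b) powr (p - 1)"
    using assms(1-4) by (intro powr_mono2) auto
  moreover have "\<bar>b - a\<bar> powr (p - 2) * (b - a) = - ((a - b) powr (p - 1))"
    using powr_eq_powr_diff_one_mult[of "a - b" "p - 1"] assms(1,2) by (simp add: abs_minus_commute algebra_simps)
  moreover have "\<bar>v b powr \<gamma> - v a powr \<gamma>\<bar> powr p = (a - \<epsilon>) powr (k - 1) * (a - \<epsilon>) powr (p - 1)"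
    unfolding v_def \<gamma>_def using assms(1,2,4) by (simp add: powr_powr powr_add[symmetric])
  ultimately show ?thesis
    unfolding v_def using assms(2,3,5) by (simp add: mult_left_mono mult_right_mono)
qed

lemma finite_superlevel_if_bounded_sums:
  fixes f :: "'a \<Rightarrow> real"
  assumes bounded: "\<And>F. finite F \<Longrightarrow> sum f F \<le> B" and "0 < \<eta>"
  shows "finite {x. \<eta> \<le> f x}"
proof (rule ccontr)
  assume "infinite {x. \<eta> \<le> f x}"
  then obtain F where F: "finite F" "card F = nat \<lceil>B / \<eta>\<rceil> + 1" "F \<subseteq> {x. \<eta> \<le> f x}"
    using infinite_arbitrarily_large by blast
  have "real (card F) * \<eta> \<le> sum f F"
    using sum_mono[of F "\<lambda>_. \<eta>" f] F(3) by auto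
  also have "\<dots> \<le> B"
    using bounded F(1) .
  finally have "real (card F) \<le> B / \<eta>"
    using \<open>0 < \<eta>\<close> by (simp add: field_simps)
  with F(2) show False
    by linarith
qed

lemma summable_on_dominated:
  fixes f g :: "'a \<Rightarrow> real"
  assumes "g summable_on UNIV" and "\<And>x. \<bar>f x\<bar> \<le> g x"
  shows "f summable_on A"
proof -
  have "(\<lambda>x. norm (g x)) summable_on UNIV"
    using assms(1) summable_on_iff_abs_summable_on_real by blast
  then have "(\<lambda>x. norm (f x)) summable_on UNIV"
    by (rule Infinite_Sum.abs_summable_on_comparison_test) (use order_trans[OF assms(2) abs_ge_self] in simp)
  then show ?thesis
    using summable_on_iff_abs_summable_on_real summable_on_subset[OF _ subset_UNIV] by blast
qed

lemma weighted_powr_sum_eq_0_imp: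
  fixes a m :: "'a \<Rightarrow> real"
  assumes "finite F" "(\<Sum>x\<in>F. a x powr P * m x) = 0"
    and "\<And>x. x \<in> F \<Longrightarrow> 0 < m x" and "x \<in> F"
  shows "a x = 0"
proof -
  have "a x powr P * m x = 0"
    by (rule sum_nonneg_0[OF assms(1) _ assms(2) assms(4)]) (simp add: less_imp_le[OF assms(3)])
  then show ?thesis
    using assms(3)[OF assms(4)] by simp
qed

lemma holder_inequality_weighted_sum:
  fixes a b m :: "'a \<Rightarrow> real"
  assumes "finite F"
    and nonneg: "\<And>x. x \<in> F \<Longrightarrow> 0 \<le> a x" "\<And>x. x \<in> F \<Longrightarrow> 0 \<le> b x" "\<And>x. x \<in> F \<Longrightarrow> 0 < m x"
    and PQ: "1 < P" "1 < Q" "1 / P + 1 / Q = 1"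
  shows "(\<Sum>x\<in>F. a x * b x * m x) \<le>
    (\<Sum>x\<in>F. a x powr P * m x) powr (1 / P) * (\<Sum>x\<in>F. b x powr Q * m x) powr (1 / Q)"
proof -
  define X where "X = (\<Sum>x\<in>F. a x powr P * m x)"
  define Y where "Y = (\<Sum>x\<in>F. b x powr Q * m x)"
  show ?thesis
  proof (cases "X = 0 \<or> Y = 0")
    case True
    have "a x = 0" if "X = 0" "x \<in> F" for x
      using weighted_powr_sum_eq_0_imp[OF \<open>finite F\<close> that(1)[unfolded X_def] nonneg(3) that(2)] .
    moreover have "b x = 0" if "Y = 0" "x \<in> F" for x
      using weighted_powr_sum_eq_0_imp[OF \<open>finite F\<close> that(1)[unfolded Y_def] nonneg(3) that(2)] .
    ultimately have "a x * b x * m x = 0" if "x \<in> F" for x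
      using True that by auto
    then have "(\<Sum>x\<in>F. a x * b x * m x) = 0"
      by (intro sum.neutral ballI)
    then show ?thesis
      by simp
  next
    case False
    have "0 \<le> X" "0 \<le> Y"
      unfolding X_def Y_def using nonneg by (auto intro!: sum_nonneg mult_nonneg_nonneg intro: less_imp_le)
    with False have "0 < X" "0 < Y"
      by auto
    define \<alpha> where "\<alpha> = X powr (1 / P)"
    define \<beta> where "\<beta> = Y powr (1 / Q)"
    have "0 < \<alpha>" "0 < \<beta>" "\<alpha> powr P = X" "\<beta> powr Q = Y"
      unfolding \<alpha>_def \<beta>_def using \<open>0 < X\<close> \<open>0 < Y\<close> PQ by (simp_all add: powr_powr)
    have young: "a x * b x * m x / (\<alpha> * \<beta>) \<le> a x powr P * m x / (X * P) + b x powr Q * m x / (Y * Q)"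
      if "x \<in> F" for x
    proof -
      have "(a x / \<alpha>) * (b x / \<beta>) \<le> (a x / \<alpha>) powr P / P + (b x / \<beta>) powr Q / Q"
        using nonneg that \<open>0 < \<alpha>\<close> \<open>0 < \<beta>\<close> PQ by (intro Youngs_inequality) auto
      also have "\<dots> = a x powr P / (X * P) + b x powr Q / (Y * Q)"
        using nonneg that \<open>0 < \<alpha>\<close> \<open>0 < \<beta>\<close> \<open>\<alpha> powr P = X\<close> \<open>\<beta> powr Q = Y\<close> by (simp add: powr_divide)
      finally have "(a x / \<alpha>) * (b x / \<beta>) * m x \<le> (a x powr P / (X * P) + b x powr Q / (Y * Q)) * m x"
        using nonneg(3)[OF that] by (intro mult_right_mono) auto
      then show ?thesis
        by (simp add: distrib_right)
    qed
    have "(\<Sum>x\<in>F. a x * b x * m x) / (\<alpha> * \<beta>) \<le>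
        (\<Sum>x\<in>F. a x powr P * m x / (X * P) + b x powr Q * m x / (Y * Q))"
      unfolding sum_divide_distrib by (rule sum_mono) (rule young)
    also have "\<dots> = X / (X * P) + Y / (Y * Q)"
      unfolding sum.distrib X_def Y_def sum_divide_distrib ..
    also have "\<dots> = 1"
      using \<open>0 < X\<close> \<open>0 < Y\<close> PQ by simp
    finally show ?thesis
      using \<open>0 < \<alpha>\<close> \<open>0 < \<beta>\<close> unfolding \<alpha>_def \<beta>_def X_def Y_def by (simp add: pos_divide_le_eq)
  qed
qed

section \<open>Left Dini derivatives\<close>

lemma eventually_at_right_0_of_at:
  fixes t :: real
  assumes "\<forall>\<^sub>F s in at t. P s"
  shows "\<forall>\<^sub>F h in at_right 0. P (t - h)"
proof -
  obtain d where "0 < d" and d: "\<And>s. s \<noteq> t \<Longrightarrow> dist s t < d \<Longrightarrow> P s"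
    using assms unfolding eventually_at by blast
  show ?thesis
    unfolding eventually_at_right_field using \<open>0 < d\<close>
    by (intro exI[of _ d]) (auto intro!: d simp: dist_real_def)
qed

lemma has_real_derivative_left_increment:
  fixes f :: "real \<Rightarrow> real"
  assumes "(f has_real_derivative d) (at s)" and "0 < \<eta>"
  shows "\<forall>\<^sub>F h in at_right 0. \<bar>f (s - h) - f s + d * h\<bar> \<le> \<eta> * h"
proof -
  have "((\<lambda>y. (f y - f s) / (y - s)) \<longlongrightarrow> d) (at s)"
    using assms(1) by (simp add: has_field_derivative_iff)
  from tendstoD[OF this assms(2)] have "\<forall>\<^sub>F y in at s. \<bar>(f y - f s) / (y - s) - d\<bar> < \<eta>"
    by (simp add: dist_real_def)
  then have "\<forall>\<^sub>F h in at_right 0. \<bar>(f (s - h) - f s) / (- h) - d\<bar> < \<eta>"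
    using eventually_at_right_0_of_at by fastforce
  with eventually_at_right_less[of 0] show ?thesis
  proof eventually_elim
    case (elim h)
    have "\<bar>f (s - h) - f s + d * h\<bar> = \<bar>(f (s - h) - f s) / (- h) - d\<bar> * h"
      using elim(1) by (simp add: abs_mult field_simps)
    then show ?case
      using elim by (simp add: mult_right_mono)
  qed
qed

lemma no_crossing_from_left:
  fixes f g :: "real \<Rightarrow> real"
  assumes "a \<le> b" "continuous_on {a..b} f" "continuous_on {a..b} g" and "f a < g a"
    and left: "\<And>t. t \<in> {a<..b} \<Longrightarrow> g t \<le> f t \<Longrightarrow> \<forall>\<^sub>F h in at_right 0. g (t - h) \<le> f (t - h)"
  shows "f b < g b"
proof (rule ccontr)
  assume "\<not> f b < g b"
  define S where "S = {t \<in> {a..b}. g t \<le> f t}"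
  have "closed S"
    unfolding S_def using assms(2,3) by (intro continuous_on_closed_Collect_le) auto
  moreover have "b \<in> S" and "bdd_below S"
    unfolding S_def using \<open>\<not> f b < g b\<close> \<open>a \<le> b\<close> by (auto intro: bdd_belowI[of _ a])
  ultimately have "Inf S \<in> S"
    using closed_contains_Inf by blast
  define s where "s = Inf S"
  have "s \<in> S"
    using \<open>Inf S \<in> S\<close> unfolding s_def .
  then have "a < s" "s \<le> b" "g s \<le> f s"
    using \<open>f a < g a\<close> unfolding S_def by (auto simp: order.order_iff_strict)
  have "\<forall>\<^sub>F h in at_right 0. h < s - a"
    unfolding eventually_at_right_field using \<open>a < s\<close> by (intro exI[of _ "s - a"]) auto
  moreover have "\<forall>\<^sub>F h in at_right 0. g (s - h) \<le> f (s - h)"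
    using left \<open>a < s\<close> \<open>s \<le> b\<close> \<open>g s \<le> f s\<close> by simp
  ultimately have "\<forall>\<^sub>F h in at_right 0. g (s - h) \<le> f (s - h) \<and> 0 < h \<and> h < s - a"
    using eventually_at_right_less[of 0] by eventually_elim auto
  then obtain h where "g (s - h) \<le> f (s - h)" "0 < h" "h < s - a"
    using eventually_happens'[OF trivial_limit_at_right_real] by blast
  then have "s - h \<in> S"
    using \<open>s \<le> b\<close> unfolding S_def by auto
  then have "s \<le> s - h"
    unfolding s_def using \<open>bdd_below S\<close> by (rule cInf_lower)
  with \<open>0 < h\<close> show False
    by simp
qed

lemma decrease_from_left_dini:
  fixes E :: "real \<Rightarrow> real"
  assumes "a \<le> b" "continuous_on {a..b} E"
    and left: "\<And>t. t \<in> {a<..b} \<Longrightarrow> \<forall>\<^sub>F h in at_right 0. E t + K * h < E (t - h)"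
  shows "E b \<le> E a - K * (b - a)"
proof (rule ccontr)
  assume contra: "\<not> ?thesis"
  define G where "G t = E t + K * (t - a)" for t
  have "G b < G b"
  proof (rule no_crossing_from_left[where f = G and g = "\<lambda>_. G b", OF \<open>a \<le> b\<close>])
    show "continuous_on {a..b} G" "continuous_on {a..b} (\<lambda>_. G b)"
      unfolding G_def using assms(2) by (auto intro!: continuous_intros)
    show "G a < G b"
      using contra unfolding G_def by (simp add: algebra_simps)
    fix t
    assume "t \<in> {a<..b}" "G b \<le> G t"
    with left[OF \<open>t \<in> {a<..b}\<close>] show "\<forall>\<^sub>F h in at_right 0. G b \<le> G (t - h)"
      by (elim eventually_mono) (simp add: G_def algebra_simps)
  qed
  then show False
    by simp
qed

text \<open>
  The profile solves \<open>\<Phi>' = - (c / 2) * \<Phi> powr \<alpha>\<close>; the factor \<open>1 / 2\<close> absorbs the error of a left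
  difference quotient.
\<close>

lemma power_profile_left_increment:
  fixes c \<alpha> s :: real
  assumes "0 < c" "1 < \<alpha>" "0 < s"
  defines "\<Phi> \<equiv> \<lambda>t. (c * (\<alpha> - 1) / 2 * t) powr (- 1 / (\<alpha> - 1))"
  shows "\<forall>\<^sub>F h in at_right 0. \<Phi> (s - h) \<le> \<Phi> s + c * \<Phi> s powr \<alpha> * h"
proof -
  define \<kappa> where "\<kappa> = c * (\<alpha> - 1) / 2"
  define \<beta> where "\<beta> = 1 / (\<alpha> - 1)"
  have "0 < \<kappa>" "\<beta> * \<kappa> = c / 2" "- \<beta> * \<alpha> = - \<beta> - 1"
    unfolding \<kappa>_def \<beta>_def using assms(1,2) by (auto simp: field_simps)
  have \<Phi>_eq: "\<Phi> = (\<lambda>t. (\<kappa> * t) powr (- \<beta>))"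
    unfolding \<Phi>_def \<kappa>_def \<beta>_def by simp
  have "0 < \<Phi> s"
    unfolding \<Phi>_eq using \<open>0 < \<kappa>\<close> assms(3) by simp
  have "(\<Phi> has_real_derivative - \<beta> * \<kappa> * (\<kappa> * s) powr (- \<beta> - 1)) (at s)"
    unfolding \<Phi>_eq using assms(3) \<open>0 < \<kappa>\<close> by (auto intro!: derivative_eq_intros simp: algebra_simps)
  moreover have "\<Phi> s powr \<alpha> = (\<kappa> * s) powr (- \<beta> - 1)"
    unfolding \<Phi>_eq using assms(3) \<open>0 < \<kappa>\<close> \<open>- \<beta> * \<alpha> = - \<beta> - 1\<close> by (simp add: powr_powr)
  ultimately have deriv: "(\<Phi> has_real_derivative - (c / 2) * \<Phi> s powr \<alpha>) (at s)"
    using \<open>\<beta> * \<kappa> = c / 2\<close> by simp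
  have "0 < c / 4 * \<Phi> s powr \<alpha>"
    using assms(1) \<open>0 < \<Phi> s\<close> by simp
  from has_real_derivative_left_increment[OF deriv this] eventually_at_right_less[of 0]
  show ?thesis
  proof eventually_elim
    case (elim h)
    define q where "q = c * \<Phi> s powr \<alpha> * h"
    have "0 \<le> q"
      unfolding q_def using assms(1) elim(2) by simp
    have "\<Phi> (s - h) - \<Phi> s - q / 2 \<le> q / 4"
      using abs_le_D1[OF elim(1)] unfolding q_def by (simp add: algebra_simps)
    with \<open>0 \<le> q\<close> show ?case
      unfolding q_def by linarith
  qed
qed

lemma power_profile_exceeds:
  fixes \<kappa> \<beta> b M :: real
  assumes "0 < \<kappa>" "0 < \<beta>" "0 < b"
  obtains t where "0 < t" "t \<le> b" "M < (\<kappa> * t) powr (- \<beta>)"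
proof -
  define M' where "M' = max M 0 + 1"
  define t where "t = min b (M' powr (- 1 / \<beta>) / \<kappa>)"
  have "0 < M'"
    unfolding M'_def by simp
  then have "0 < t" "t \<le> b"
    unfolding t_def using assms by auto
  have "M < M'"
    unfolding M'_def by simp
  also have "M' = (M' powr (- 1 / \<beta>)) powr (- \<beta>)"
    using \<open>0 < M'\<close> assms(2) by (simp add: powr_powr)
  also have "\<dots> \<le> (\<kappa> * t) powr (- \<beta>)"
    using \<open>0 < t\<close> \<open>0 < M'\<close> assms unfolding t_def
    by (intro powr_mono2') (auto simp: field_simps min_def)
  finally show thesis
    using that \<open>0 < t\<close> \<open>t \<le> b\<close> by blast
qed

lemma power_decay_from_left_dini:
  fixes E :: "real \<Rightarrow> real"
  assumes "0 < b" "0 < c" "1 < \<alpha>"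
    and cont: "continuous_on {0..b} E" and nonneg: "\<And>t. t \<in> {0..b} \<Longrightarrow> 0 \<le> E t"
    and left: "\<And>t. t \<in> {0<..b} \<Longrightarrow> 0 < E t \<Longrightarrow>
      \<forall>\<^sub>F h in at_right 0. E t + c * E t powr \<alpha> * h \<le> E (t - h)"
  shows "E b \<le> (c * (\<alpha> - 1) * b / 2) powr (- 1 / (\<alpha> - 1))"
proof -
  define \<kappa> where "\<kappa> = c * (\<alpha> - 1) / 2"
  define \<beta> where "\<beta> = 1 / (\<alpha> - 1)"
  define \<Phi> where "\<Phi> t = (\<kappa> * t) powr (- \<beta>)" for t
  have "0 < \<kappa>" "0 < \<beta>"
    unfolding \<kappa>_def \<beta>_def using assms(2,3) by auto
  obtain M where M: "\<And>t. t \<in> {0..b} \<Longrightarrow> E t \<le> M"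
    using continuous_attains_sup[OF compact_Icc _ cont] \<open>0 < b\<close> by fastforce
  obtain t1 where "0 < t1" "t1 \<le> b" "M < \<Phi> t1"
    using power_profile_exceeds[OF \<open>0 < \<kappa>\<close> \<open>0 < \<beta>\<close> \<open>0 < b\<close>] unfolding \<Phi>_def by blast
  then have "E t1 < \<Phi> t1"
    using M[of t1] by simp
  have "E b < \<Phi> b"
  proof (rule no_crossing_from_left[where f = E and g = \<Phi>, OF \<open>t1 \<le> b\<close> _ _ \<open>E t1 < \<Phi> t1\<close>])
    show "continuous_on {t1..b} E"
      using \<open>0 < t1\<close> by (intro continuous_on_subset[OF cont]) auto
    show "continuous_on {t1..b} \<Phi>"
      unfolding \<Phi>_def using \<open>0 < t1\<close> \<open>0 < \<kappa>\<close> by (intro continuous_intros) auto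
    fix s
    assume s: "s \<in> {t1<..b}" "\<Phi> s \<le> E s"
    then have "s \<in> {0<..b}"
      using \<open>0 < t1\<close> by simp
    then have "0 < \<Phi> s"
      unfolding \<Phi>_def using \<open>0 < \<kappa>\<close> by simp
    then have "0 < E s" "\<Phi> s powr \<alpha> \<le> E s powr \<alpha>"
      using s(2) \<open>1 < \<alpha>\<close> by (auto intro: powr_mono2)
    have "\<forall>\<^sub>F h in at_right 0. \<Phi> (s - h) \<le> \<Phi> s + c * \<Phi> s powr \<alpha> * h"
      using power_profile_left_increment[OF \<open>0 < c\<close> \<open>1 < \<alpha>\<close>, of s] \<open>s \<in> {0<..b}\<close>
      unfolding \<Phi>_def \<kappa>_def \<beta>_def by simp
    with left[OF \<open>s \<in> {0<..b}\<close> \<open>0 < E s\<close>] eventually_at_right_less[of 0]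
    show "\<forall>\<^sub>F h in at_right 0. \<Phi> (s - h) \<le> E (s - h)"
    proof eventually_elim
      case (elim h)
      have "c * \<Phi> s powr \<alpha> * h \<le> c * E s powr \<alpha> * h"
        using \<open>\<Phi> s powr \<alpha> \<le> E s powr \<alpha>\<close> \<open>0 < c\<close> elim(2) by (intro mult_right_mono mult_left_mono) auto
      with elim(1,3) s(2) show ?case
        by linarith
    qed
  qed
  moreover have "\<Phi> b = (c * (\<alpha> - 1) * b / 2) powr (- 1 / (\<alpha> - 1))"
    unfolding \<Phi>_def \<kappa>_def \<beta>_def by simp
  ultimately show ?thesis
    by simp
qed

lemma continuous_on_uniform_approximation:
  fixes f :: "'a::metric_space \<Rightarrow> real"
  assumes approx: "\<And>\<epsilon>. 0 < \<epsilon> \<Longrightarrow> \<exists>g. continuous_on S g \<and> (\<forall>t\<in>S. \<bar>f t - g t\<bar> \<le> \<epsilon>)"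
  shows "continuous_on S f"
  unfolding continuous_on_iff
proof (intro ballI allI impI)
  fix t \<epsilon> assume "t \<in> S" "0 < (\<epsilon>::real)"
  then obtain g where g: "continuous_on S g" "\<And>s. s \<in> S \<Longrightarrow> \<bar>f s - g s\<bar> \<le> \<epsilon> / 3"
    using approx[of "\<epsilon> / 3"] by auto
  have "0 < \<epsilon> / 3"
    using \<open>0 < \<epsilon>\<close> by simp
  with g(1) \<open>t \<in> S\<close> obtain d where "0 < d"
    and d: "\<And>s. s \<in> S \<Longrightarrow> dist s t < d \<Longrightarrow> dist (g s) (g t) < \<epsilon> / 3"
    unfolding continuous_on_iff by blast
  show "\<exists>d>0. \<forall>s\<in>S. dist s t < d \<longrightarrow> dist (f s) (f t) < \<epsilon>"
  proof (intro exI[of _ d] conjI ballI impI \<open>0 < d\<close>)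
    fix s assume "s \<in> S" "dist s t < d"
    then show "dist (f s) (f t) < \<epsilon>"
      using d[of s] g(2)[of s] g(2)[OF \<open>t \<in> S\<close>] unfolding dist_real_def by linarith
  qed
qed

section \<open>Summation by parts on a weighted graph\<close>

definition dirichlet_energy :: "('v \<Rightarrow> 'v \<Rightarrow> real) \<Rightarrow> real \<Rightarrow> ('v \<Rightarrow> real) \<Rightarrow> real" where
  "dirichlet_energy w p f = (\<Sum>\<^sub>\<infinity>(x, y). \<bar>f y - f x\<bar> powr p * w x y)"

lemma dirichlet_energy_nonneg:
  assumes "\<And>x y. 0 \<le> w x y"
  shows "0 \<le> dirichlet_energy w p f"
  unfolding dirichlet_energy_def using assms by (intro infsum_nonneg) auto

lemma sum_pairs_antisym:
  fixes g :: "'a \<Rightarrow> real" and \<psi> :: "'a \<Rightarrow> 'a \<Rightarrow> real"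
  assumes antisym: "\<And>x y. \<psi> y x = - \<psi> x y"
  shows "2 * (\<Sum>x\<in>F. \<Sum>y\<in>F. g x * \<psi> x y) = - (\<Sum>x\<in>F. \<Sum>y\<in>F. (g y - g x) * \<psi> x y)"
proof -
  have "(\<Sum>x\<in>F. \<Sum>y\<in>F. g x * \<psi> x y) = (\<Sum>x\<in>F. \<Sum>y\<in>F. g y * \<psi> y x)"
    by (rule sum.swap)
  also have "\<dots> = (\<Sum>x\<in>F. \<Sum>y\<in>F. - (g y * \<psi> x y))"
    by (intro sum.cong refl) (subst antisym, simp)
  also have "\<dots> = - (\<Sum>x\<in>F. \<Sum>y\<in>F. g y * \<psi> x y)"
    by (simp add: sum_negf)
  finally show ?thesis
    by (simp add: algebra_simps sum_subtractf)
qed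

lemma interior_pairs_inequality:
  fixes v :: "'a \<Rightarrow> real" and w :: "'a \<Rightarrow> 'a \<Rightarrow> real"
  assumes "\<And>x y. w x y = w y x" "\<And>x y. 0 \<le> w x y" and pos: "\<And>x. x \<in> F \<Longrightarrow> 0 < v x"
    and "2 \<le> k" "0 < p"
  defines "\<gamma> \<equiv> (k + p - 2) / p"
  shows "2 * (\<Sum>x\<in>F. \<Sum>y\<in>F. k * v x powr (k - 1) * (\<bar>v y - v x\<bar> powr (p - 2) * (v y - v x) * w x y))
    \<le> - (k / \<gamma> powr p) * (\<Sum>x\<in>F. \<Sum>y\<in>F. \<bar>v y powr \<gamma> - v x powr \<gamma>\<bar> powr p * w x y)"
proof -
  define \<psi> where "\<psi> x y = \<bar>v y - v x\<bar> powr (p - 2) * (v y - v x) * w x y" for x y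
  have "\<psi> y x = - \<psi> x y" for x y
    unfolding \<psi>_def using assms(1) by (simp add: abs_minus_commute algebra_simps)
  then have "2 * (\<Sum>x\<in>F. \<Sum>y\<in>F. k * v x powr (k - 1) * \<psi> x y)
      = - (\<Sum>x\<in>F. \<Sum>y\<in>F. (k * v y powr (k - 1) - k * v x powr (k - 1)) * \<psi> x y)"
    by (rule sum_pairs_antisym)
  also have "\<dots> \<le> - (\<Sum>x\<in>F. \<Sum>y\<in>F. k / \<gamma> powr p * (\<bar>v y powr \<gamma> - v x powr \<gamma>\<bar> powr p * w x y))"
  proof -
    have "k / \<gamma> powr p * \<bar>v y powr \<gamma> - v x powr \<gamma>\<bar> powr p * w x y
        \<le> (k * v y powr (k - 1) - k * v x powr (k - 1)) * (\<bar>v y - v x\<bar> powr (p - 2) * (v y - v x)) * w x y"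
      if "x \<in> F" "y \<in> F" for x y
      using power_difference_inequality[OF pos[OF that(1)] pos[OF that(2)] assms(4,5)] assms(2)
      unfolding \<gamma>_def by (rule mult_right_mono)
    then show ?thesis
      unfolding \<psi>_def by (simp add: sum_mono algebra_simps)
  qed
  also have "\<dots> = - (k / \<gamma> powr p) * (\<Sum>x\<in>F. \<Sum>y\<in>F. \<bar>v y powr \<gamma> - v x powr \<gamma>\<bar> powr p * w x y)"
    by (simp add: sum_distrib_left sum_negf)
  finally show ?thesis
    unfolding \<psi>_def .
qed

lemma infsum_pairs_le_twice_rows:
  fixes h :: "'a \<Rightarrow> 'a \<Rightarrow> real"
  assumes "finite F" and nonneg: "\<And>x y. 0 \<le> h x y" and sym: "\<And>x y. h x y = h y x"
    and outside: "\<And>x y. x \<notin> F \<Longrightarrow> y \<notin> F \<Longrightarrow> h x y = 0"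
    and rows: "\<And>x. h x summable_on UNIV"
  shows "(\<Sum>\<^sub>\<infinity>(x, y). h x y) \<le> 2 * (\<Sum>x\<in>F. \<Sum>\<^sub>\<infinity>y. h x y)"
proof -
  define R where "R = (\<Sum>x\<in>F. \<Sum>\<^sub>\<infinity>y. h x y)"
  define h1 where "h1 = (\<lambda>(x, y). if x \<in> F then h x y else 0)"
  have h1_bound: "sum h1 Q \<le> R" if "finite Q" for Q
  proof -
    have "sum h1 Q = sum h1 (Q \<inter> (F \<times> UNIV))"
      unfolding h1_def by (rule sum.mono_neutral_right) (use that in \<open>auto split: if_splits\<close>)
    also have "\<dots> \<le> sum h1 (F \<times> snd ` Q)"
      unfolding h1_def by (rule sum_mono2) (use \<open>finite F\<close> that nonneg in \<open>force simp: image_iff\<close>)+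
    also have "\<dots> = (\<Sum>x\<in>F. \<Sum>y\<in>snd ` Q. h x y)"
      unfolding h1_def by (subst sum.cartesian_product[symmetric]) (auto intro!: sum.cong)
    also have "\<dots> \<le> R"
      unfolding R_def using that nonneg by (intro sum_mono finite_sum_le_infsum rows) auto
    finally show ?thesis .
  qed
  have partial_bound: "sum (\<lambda>(x, y). h x y) Q \<le> 2 * R" if "finite Q" for Q
  proof -
    have "sum (\<lambda>(x, y). h x y) Q \<le> sum (\<lambda>q. h1 q + h1 (prod.swap q)) Q"
      by (rule sum_mono) (use nonneg sym outside in \<open>auto simp: h1_def split: prod.splits\<close>)
    also have "\<dots> = sum h1 Q + sum h1 (prod.swap ` Q)"
      by (simp add: sum.distrib sum.reindex)
    also have "\<dots> \<le> R + R"
      using that by (intro add_mono h1_bound) auto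
    finally show ?thesis
      by simp
  qed
  have summable: "(\<lambda>(x, y). h x y) summable_on UNIV"
    by (rule nonneg_bdd_above_summable_on) (use nonneg partial_bound in \<open>auto intro!: bdd_aboveI[of _ "2 * R"]\<close>)
  show ?thesis
    using infsum_le_finite_sums[OF summable, of "2 * R"] partial_bound unfolding R_def by auto
qed

lemma difference_powr_summable:
  fixes f :: "'a \<Rightarrow> real" and w :: "'a \<Rightarrow> 'a \<Rightarrow> real"
  assumes "\<And>x. w x summable_on UNIV" "\<And>x y. 0 \<le> w x y" "\<And>x. \<bar>f x\<bar> \<le> K" "0 \<le> q"
  shows "(\<lambda>y. \<bar>f y - f x\<bar> powr q * w x y) summable_on A"
proof (rule summable_on_dominated[OF summable_on_cmult_right[OF assms(1)]])
  fix y
  have "\<bar>f y - f x\<bar> \<le> 2 * K"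
    using assms(3)[of x] assms(3)[of y] by linarith
  then show "\<bar>\<bar>f y - f x\<bar> powr q * w x y\<bar> \<le> (2 * K) powr q * w x y"
    using assms(2)[of x y] assms(4) by (simp add: abs_mult mult_right_mono powr_mono2)
qed

lemma split_pairing_inequality:
  fixes g :: "'a \<Rightarrow> real" and \<psi> h :: "'a \<Rightarrow> 'a \<Rightarrow> real"
  assumes "finite F"
    and \<psi>_summable: "\<And>x A. \<psi> x summable_on A" and h_summable: "\<And>x A. h x summable_on A"
    and h_nonneg: "\<And>x y. 0 \<le> h x y" and h_sym: "\<And>x y. h x y = h y x"
    and h_outside: "\<And>x y. x \<notin> F \<Longrightarrow> y \<notin> F \<Longrightarrow> h x y = 0"
    and interior: "2 * (\<Sum>x\<in>F. \<Sum>y\<in>F. g x * \<psi> x y) \<le> - c * (\<Sum>x\<in>F. \<Sum>y\<in>F. h x y)"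
    and boundary: "\<And>x y. x \<in> F \<Longrightarrow> y \<notin> F \<Longrightarrow> g x * \<psi> x y \<le> - k * h x y"
    and "0 \<le> c" "c \<le> k"
  shows "(\<Sum>x\<in>F. g x * (\<Sum>\<^sub>\<infinity>y. \<psi> x y)) \<le> - (c / 4) * (\<Sum>\<^sub>\<infinity>(x, y). h x y)"
proof -
  define H1 where "H1 = (\<Sum>x\<in>F. \<Sum>y\<in>F. h x y)"
  define H2 where "H2 = (\<Sum>x\<in>F. \<Sum>\<^sub>\<infinity>y\<in>-F. h x y)"
  have split: "(\<Sum>\<^sub>\<infinity>y. f y) = (\<Sum>y\<in>F. f y) + (\<Sum>\<^sub>\<infinity>y\<in>-F. f y)" if "\<And>A. f summable_on A"
    for f :: "'a \<Rightarrow> real"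
    using infsum_Un_disjoint[of f F "-F"] that \<open>finite F\<close> by (simp add: Un_commute)
  have "0 \<le> H2"
    unfolding H2_def using h_nonneg by (auto intro!: sum_nonneg infsum_nonneg)
  have "(\<Sum>x\<in>F. g x * (\<Sum>\<^sub>\<infinity>y\<in>-F. \<psi> x y)) \<le> (\<Sum>x\<in>F. \<Sum>\<^sub>\<infinity>y\<in>-F. - k * h x y)"
    unfolding infsum_cmult_right'[symmetric] using boundary
    by (intro sum_mono infsum_mono summable_on_cmult_right \<psi>_summable h_summable) auto
  also have "\<dots> = - k * H2"
    unfolding H2_def by (simp only: infsum_cmult_right' sum_distrib_left)
  finally have outer: "(\<Sum>x\<in>F. g x * (\<Sum>\<^sub>\<infinity>y\<in>-F. \<psi> x y)) \<le> - k * H2" .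
  have "(\<Sum>x\<in>F. g x * (\<Sum>\<^sub>\<infinity>y. \<psi> x y)) =
      (\<Sum>x\<in>F. \<Sum>y\<in>F. g x * \<psi> x y) + (\<Sum>x\<in>F. g x * (\<Sum>\<^sub>\<infinity>y\<in>-F. \<psi> x y))"
    by (simp add: split[OF \<psi>_summable] distrib_left sum.distrib sum_distrib_left)
  also have "\<dots> \<le> - (c * H1) / 2 - (c * H2) / 2"
    using interior outer mult_right_mono[OF \<open>c \<le> k\<close> \<open>0 \<le> H2\<close>] mult_nonneg_nonneg[OF \<open>0 \<le> c\<close> \<open>0 \<le> H2\<close>]
    unfolding H1_def by linarith
  also have "\<dots> = - (c / 4) * (2 * (H1 + H2))"
    by (simp add: algebra_simps)
  also have "\<dots> \<le> - (c / 4) * (\<Sum>\<^sub>\<infinity>(x, y). h x y)"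
  proof -
    have "(\<Sum>\<^sub>\<infinity>(x, y). h x y) \<le> 2 * (\<Sum>x\<in>F. \<Sum>\<^sub>\<infinity>y. h x y)"
      by (rule infsum_pairs_le_twice_rows[OF \<open>finite F\<close> h_nonneg h_sym h_outside h_summable])
    also have "\<dots> = 2 * (H1 + H2)"
      unfolding H1_def H2_def by (simp add: split[OF h_summable] sum.distrib)
    finally show ?thesis
      using \<open>0 \<le> c\<close> by (simp add: mult_left_mono)
  qed
  finally show ?thesis .
qed

lemma truncated_power_pairing:
  fixes w :: "'v \<Rightarrow> 'v \<Rightarrow> real" and u :: "'v \<Rightarrow> real"
  assumes w_sym: "\<And>x y. w x y = w y x" and w_nonneg: "\<And>x y. 0 \<le> w x y"
    and w_summable: "\<And>x. w x summable_on UNIV"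
    and bounded: "\<And>x. \<bar>u x\<bar> \<le> K" and finite: "finite {x. \<epsilon> < u x}" and "2 \<le> k" "1 \<le> p"
  defines "v \<equiv> \<lambda>x. max (u x - \<epsilon>) 0" and "\<gamma> \<equiv> (k + p - 2) / p"
  shows "(\<Sum>x\<in>{x. \<epsilon> < u x}. k * v x powr (k - 1) *
      (\<Sum>\<^sub>\<infinity>y. \<bar>u y - u x\<bar> powr (p - 2) * (u y - u x) * w x y))
    \<le> - (k / \<gamma> powr p / 4) * dirichlet_energy w p (\<lambda>x. v x powr \<gamma>)"
proof -
  define F where "F = {x. \<epsilon> < u x}"
  define \<psi> where "\<psi> x y = \<bar>u y - u x\<bar> powr (p - 2) * (u y - u x) * w x y" for x y
  define h where "h x y = \<bar>v y powr \<gamma> - v x powr \<gamma>\<bar> powr p * w x y" for x y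
  have "1 \<le> \<gamma>"
    unfolding \<gamma>_def using assms(6,7) by (simp add: field_simps)
  have v_in: "0 < v x" "u y - u x = v y - v x" if "x \<in> F" "y \<in> F" for x y
    using that unfolding F_def v_def by auto
  have v_out: "v x = 0" if "x \<notin> F" for x
    using that unfolding F_def v_def by auto
  have \<psi>_summable: "\<psi> x summable_on A" for x A
  proof (rule summable_on_dominated)
    show "(\<lambda>y. \<bar>u y - u x\<bar> powr (p - 1) * w x y) summable_on UNIV"
      by (rule difference_powr_summable[OF w_summable w_nonneg bounded]) (use \<open>1 \<le> p\<close> in simp)
    show "\<bar>\<psi> x y\<bar> \<le> \<bar>u y - u x\<bar> powr (p - 1) * w x y" for y
      unfolding \<psi>_def abs_mult[of "_ * _" "w x y"] abs_powr_mult_self using w_nonneg by simp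
  qed
  have v_powr_bound: "\<bar>v x powr \<gamma>\<bar> \<le> (K + \<bar>\<epsilon>\<bar>) powr \<gamma>" for x
    using bounded[of x] \<open>1 \<le> \<gamma>\<close> unfolding v_def by (auto intro!: powr_mono2)
  have h_summable: "h x summable_on A" for x A
    unfolding h_def
    by (rule difference_powr_summable[OF w_summable w_nonneg v_powr_bound]) (use \<open>1 \<le> p\<close> in simp)
  have interior: "2 * (\<Sum>x\<in>F. \<Sum>y\<in>F. k * v x powr (k - 1) * \<psi> x y) \<le> - (k / \<gamma> powr p) * (\<Sum>x\<in>F. \<Sum>y\<in>F. h x y)"
  proof -
    have "(\<Sum>x\<in>F. \<Sum>y\<in>F. k * v x powr (k - 1) * \<psi> x y) =
        (\<Sum>x\<in>F. \<Sum>y\<in>F. k * v x powr (k - 1) * (\<bar>v y - v x\<bar> powr (p - 2) * (v y - v x) * w x y))"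
      unfolding \<psi>_def by (intro sum.cong refl) (simp add: v_in)
    then show ?thesis
      unfolding h_def \<gamma>_def
      using interior_pairs_inequality[OF w_sym w_nonneg, of F v k p] v_in assms(6,7) by simp
  qed
  have boundary: "k * v x powr (k - 1) * \<psi> x y \<le> - k * h x y" if "x \<in> F" "y \<notin> F" for x y
    using boundary_pair_inequality[of "u y" \<epsilon> "u x" k p "w x y"] that w_nonneg assms(6,7)
    unfolding F_def v_def \<psi>_def h_def \<gamma>_def by simp
  have c: "0 \<le> k / \<gamma> powr p" "k / \<gamma> powr p \<le> k"
    using \<open>1 \<le> \<gamma>\<close> assms(6,7) ge_one_powr_ge_zero[of \<gamma> p] by (auto simp: divide_le_eq)
  have "finite F"
    using finite unfolding F_def .
  have h_nonneg: "0 \<le> h x y" and h_sym: "h x y = h y x" for x y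
    unfolding h_def using w_nonneg by (simp_all add: w_sym abs_minus_commute)
  have h_outside: "h x y = 0" if "x \<notin> F" "y \<notin> F" for x y
    unfolding h_def using that v_out by simp
  have "(\<Sum>x\<in>F. k * v x powr (k - 1) * (\<Sum>\<^sub>\<infinity>y. \<psi> x y))
      \<le> - (k / \<gamma> powr p / 4) * (\<Sum>\<^sub>\<infinity>(x, y). h x y)"
    by (rule split_pairing_inequality[OF \<open>finite F\<close> \<psi>_summable h_summable h_nonneg h_sym h_outside
          interior boundary c])
  then show ?thesis
    unfolding F_def \<psi>_def h_def dirichlet_energy_def .
qed

section \<open>Energy of superlevel sets\<close>

text \<open>
  \<open>k\<close> is the test exponent \<open>\<nu> + 1\<close>, \<open>ps\<close> the Sobolev exponent \<open>p\<^sup>*\<close>, \<open>e\<close> the exponent of \<open>\<rho>\<close>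
  in the summability hypothesis and \<open>A\<close> a bound for the partial sums of \<open>\<rho>\<^sup>e m\<close>. The assumption
  \<open>conjugate\<close> says that Hoelder's inequality with exponents \<open>e\<close> and \<open>e_conj\<close> turns
  \<open>(u - L)\<^sub>+\<^sup>k\<close> into the Sobolev power \<open>((u - L)\<^sub>+\<^sup>\<gamma>)\<^sup>p\<^sup>*\<close>.
\<close>

locale plap_setting =
  fixes w :: "'v \<Rightarrow> 'v \<Rightarrow> real" and rho :: "'v \<Rightarrow> real"
    and p k cm CS ps e A :: real
  assumes w_sym: "\<And>x y. w x y = w y x" and w_nonneg: "\<And>x y. 0 \<le> w x y"
    and w_summable: "\<And>x. w x summable_on UNIV"
    and vmeas_ge: "\<And>x. cm \<le> vmeas w x" and cm_pos: "0 < cm"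
    and rho_pos: "\<And>x. 0 < rho x"
    and p_gt_2: "2 < p" and k_ge_2: "2 \<le> k"
    and sobolev: "\<And>U f. finite U \<Longrightarrow> (\<And>x. x \<notin> U \<Longrightarrow> f x = 0) \<Longrightarrow>
      (\<Sum>x\<in>U. \<bar>f x\<bar> powr ps * vmeas w x) powr (1 / ps) \<le> CS * dirichlet_energy w p f powr (1 / p)"
    and CS_pos: "0 < CS" and ps_pos: "0 < ps"
    and e_gt_1: "1 < e" and conjugate: "1 / e + k * p / ((k + p - 2) * ps) = 1"
    and weight_bound: "\<And>G. finite G \<Longrightarrow> (\<Sum>x\<in>G. rho x powr e * vmeas w x) \<le> A"
begin

definition \<gamma> :: real where "\<gamma> = (k + p - 2) / p"

definition \<alpha> :: real where "\<alpha> = (k + p - 2) / k"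

definition e_conj :: real where "e_conj = \<gamma> * ps / k"

definition pairing_const :: real where "pairing_const = k / \<gamma> powr p"

definition decay_const :: real where
  "decay_const = pairing_const / 4 / (A powr (\<alpha> / e) * CS powr p)"

definition sobolev_sup_const :: real where
  "sobolev_sup_const = CS powr (1 / \<gamma>) * cm powr (- 1 / (\<gamma> * ps))"

definition sup_decay_const :: real where
  "sup_decay_const = sobolev_sup_const *
     (16 * (decay_const * (\<alpha> - 1) / 8) powr (- 1 / (\<alpha> - 1)) / pairing_const) powr (1 / (\<gamma> * p))"

lemma dirichlet_nonneg: "0 \<le> dirichlet_energy w p f"
  using w_nonneg by (rule dirichlet_energy_nonneg)

lemma vmeas_pos: "0 < vmeas w x"
  using vmeas_ge[of x] cm_pos by linarith

lemma gamma_times_p: "\<gamma> * p = k + p - 2"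
  unfolding \<gamma>_def using p_gt_2 by simp

lemma gamma_ge_1: "1 \<le> \<gamma>"
  unfolding \<gamma>_def using p_gt_2 k_ge_2 by (simp add: field_simps)

lemma alpha_gt_1: "1 < \<alpha>"
  unfolding \<alpha>_def using p_gt_2 k_ge_2 by (simp add: field_simps)

lemma alpha_eq: "\<alpha> = \<gamma> * p / k"
  unfolding \<alpha>_def gamma_times_p ..

lemma pairing_const_pos: "0 < pairing_const"
  unfolding pairing_const_def using k_ge_2 gamma_ge_1 by simp

lemma A_pos: "0 < A"
proof -
  have "0 < rho undefined powr e * vmeas w undefined"
    using rho_pos[of undefined] vmeas_pos[of undefined] by simp
  also have "\<dots> \<le> A"
    using weight_bound[of "{undefined}"] by simp
  finally show ?thesis .
qed

lemma decay_const_pos: "0 < decay_const"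
  unfolding decay_const_def using pairing_const_pos A_pos CS_pos by simp

lemma e_conj_conjugate: "1 < e_conj" "1 / e + 1 / e_conj = 1"
proof -
  have "1 / e_conj = k * p / ((k + p - 2) * ps)"
    unfolding e_conj_def \<gamma>_def using p_gt_2 by simp
  then show "1 / e + 1 / e_conj = 1"
    using conjugate by simp
  moreover have "0 < 1 / e"
    using e_gt_1 by simp
  ultimately have "1 / e_conj < 1"
    by linarith
  moreover have "0 < e_conj"
    unfolding e_conj_def \<gamma>_def using p_gt_2 k_ge_2 ps_pos by simp
  ultimately show "1 < e_conj"
    by (simp add: divide_less_eq)
qed

lemma alpha_div_e_conj: "\<alpha> / e_conj = p / ps"
  unfolding alpha_eq e_conj_def using k_ge_2 gamma_ge_1 ps_pos by (simp add: field_simps)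

lemma rho_superlevel_finite:
  assumes "0 < \<delta>"
  shows "finite {x. \<delta> \<le> rho x}"
proof -
  have "finite {x. \<delta> powr e * cm \<le> rho x powr e * vmeas w x}"
    using weight_bound assms cm_pos by (intro finite_superlevel_if_bounded_sums) auto
  moreover have "{x. \<delta> \<le> rho x} \<subseteq> {x. \<delta> powr e * cm \<le> rho x powr e * vmeas w x}"
    using assms e_gt_1 vmeas_ge cm_pos by (auto intro!: mult_mono powr_mono2)
  ultimately show ?thesis
    by (rule finite_subset[rotated])
qed

lemma sobolev_sup_const_eq:
  assumes "0 \<le> P"
  shows "((CS * P powr (1 / p)) powr ps / cm) powr (1 / (\<gamma> * ps)) = sobolev_sup_const * P powr (1 / (\<gamma> * p))"
proof -
  have exponents: "ps * (1 / (\<gamma> * ps)) = 1 / \<gamma>" "1 / p * ps * (1 / (\<gamma> * ps)) = 1 / (\<gamma> * p)"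
    using ps_pos by simp_all
  have "((CS * P powr (1 / p)) powr ps / cm) powr (1 / (\<gamma> * ps))
      = CS powr (ps * (1 / (\<gamma> * ps))) * P powr (1 / p * ps * (1 / (\<gamma> * ps))) / cm powr (1 / (\<gamma> * ps))"
    using CS_pos cm_pos assms by (simp add: powr_mult powr_divide powr_powr)
  then show ?thesis
    unfolding exponents sobolev_sup_const_def by (simp add: powr_minus_divide)
qed

lemma sup_decay_const_scaling:
  assumes "0 < t"
  shows "sobolev_sup_const *
      (16 * (decay_const * (\<alpha> - 1) * (t / 2) / 4) powr (- 1 / (\<alpha> - 1)) / (pairing_const * t))
        powr (1 / (\<gamma> * p))
    = sup_decay_const * t powr (- 1 / (p - 2))"
proof -
  define a where "a = decay_const * (\<alpha> - 1) / 8"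
  define q where "q = - 1 / (\<alpha> - 1)"
  define B where "B = 16 * a powr q / pairing_const"
  have "0 < a" "0 < B"
    unfolding a_def B_def using decay_const_pos alpha_gt_1 pairing_const_pos by simp_all
  have "16 * (a * t) powr q / (pairing_const * t) = B * t powr (q - 1)"
    unfolding B_def using \<open>0 < a\<close> assms by (simp add: powr_mult powr_diff)
  moreover have "(B * t powr (q - 1)) powr (1 / (\<gamma> * p)) = B powr (1 / (\<gamma> * p)) * t powr ((q - 1) / (\<gamma> * p))"
    using \<open>0 < B\<close> assms by (simp add: powr_mult powr_powr)
  moreover have "(q - 1) / (\<gamma> * p) = - 1 / (p - 2)"
  proof -
    have "\<alpha> - 1 = (p - 2) / k"
      unfolding \<alpha>_def using k_ge_2 by (simp add: field_simps)
    then have "q = - k / (p - 2)"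
      unfolding q_def by simp
    then have "q - 1 = - (k + p - 2) / (p - 2)"
      using p_gt_2 by (simp add: field_simps)
    then show ?thesis
      unfolding gamma_times_p using k_ge_2 p_gt_2 by (simp add: field_simps)
  qed
  moreover have "decay_const * (\<alpha> - 1) * (t / 2) / 4 = a * t"
    unfolding a_def by simp
  ultimately show ?thesis
    unfolding sup_decay_const_def B_def a_def q_def by (simp add: mult.assoc)
qed

end

locale plap_solution = plap_setting +
  fixes u u' :: "'v \<Rightarrow> real \<Rightarrow> real" and T r M :: real
  assumes T_pos: "0 < T"
    and u_nonneg: "\<And>x t. 0 \<le> t \<Longrightarrow> 0 \<le> u x t"
    and r_pos: "0 < r"
    and lr_bound: "\<And>t F. t \<in> {0..T} \<Longrightarrow> finite F \<Longrightarrow> (\<Sum>x\<in>F. \<bar>u x t\<bar> powr r * vmeas w x) \<le> M"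
    and u_deriv: "\<And>x t. t \<in> {0..T} \<Longrightarrow> (u x has_real_derivative u' x t) (at t within {0..T})"
    and equation: "\<And>x t. t \<in> {0<..<T} \<Longrightarrow> rho x * u' x t = plap w p (\<lambda>y. u y t) x"
begin

definition linfty_bound :: real where "linfty_bound = (M / cm) powr (1 / r)"

definition level_set :: "real \<Rightarrow> real \<Rightarrow> 'v set" where "level_set L t = {x. L < u x t}"

definition excess :: "real \<Rightarrow> real \<Rightarrow> 'v \<Rightarrow> real" where "excess L t x = max (u x t - L) 0"

definition energy :: "real \<Rightarrow> real \<Rightarrow> real" where
  "energy L t = (\<Sum>x\<in>level_set L t. rho x * vmeas w x * excess L t x powr k)"

definition dissipation :: "real \<Rightarrow> real \<Rightarrow> real" where
  "dissipation L t =
     (\<Sum>x\<in>level_set L t. k * excess L t x powr (k - 1) * vmeas w x * plap w p (\<lambda>y. u y t) x)"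

lemma u_le_linfty_bound:
  assumes "t \<in> {0..T}"
  shows "u x t \<le> linfty_bound"
proof -
  have "0 \<le> u x t"
    using assms u_nonneg by simp
  then have "u x t powr r * cm \<le> \<bar>u x t\<bar> powr r * vmeas w x"
    using vmeas_ge[of x] by (simp add: mult_left_mono)
  also have "\<dots> \<le> M"
    using lr_bound[OF assms, of "{x}"] by simp
  finally have "u x t powr r \<le> M / cm"
    using cm_pos by (simp add: field_simps)
  then have "(u x t powr r) powr (1 / r) \<le> (M / cm) powr (1 / r)"
    using r_pos by (intro powr_mono2) auto
  then show ?thesis
    unfolding linfty_bound_def using r_pos \<open>0 \<le> u x t\<close> by (simp add: powr_powr)
qed

lemma finite_level_set:
  assumes "t \<in> {0..T}" "0 < L"
  shows "finite (level_set L t)"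
proof -
  have "finite {x. L powr r * cm \<le> \<bar>u x t\<bar> powr r * vmeas w x}"
    using lr_bound[OF assms(1)] assms(2) cm_pos by (intro finite_superlevel_if_bounded_sums) auto
  moreover have "level_set L t \<subseteq> {x. L powr r * cm \<le> \<bar>u x t\<bar> powr r * vmeas w x}"
    unfolding level_set_def using assms(2) r_pos vmeas_ge cm_pos
    by (auto intro!: mult_mono powr_mono2)
  ultimately show ?thesis
    by (rule finite_subset[rotated])
qed

lemma energy_nonneg: "0 \<le> energy L t"
  unfolding energy_def
  by (intro sum_nonneg mult_nonneg_nonneg) (simp_all add: less_imp_le[OF rho_pos] less_imp_le[OF vmeas_pos])

lemma sum_le_energy:
  assumes "t \<in> {0..T}" "0 < L" "finite G"
  shows "(\<Sum>x\<in>G. rho x * vmeas w x * excess L t x powr k) \<le> energy L t"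
proof -
  let ?f = "\<lambda>x. rho x * vmeas w x * excess L t x powr k"
  have "sum ?f G = sum ?f (G \<inter> level_set L t)"
    by (rule sum.mono_neutral_right) (auto simp: assms(3) excess_def level_set_def)
  also have "\<dots> \<le> sum ?f (level_set L t)"
    using finite_level_set[OF assms(1,2)]
    by (intro sum_mono2) (auto intro!: mult_nonneg_nonneg simp: less_imp_le[OF rho_pos] less_imp_le[OF vmeas_pos])
  finally show ?thesis
    unfolding energy_def .
qed

lemma energy_tail:
  assumes "t \<in> {0..T}" "0 < L" "0 < \<delta>"
  shows "\<bar>energy L t - (\<Sum>x\<in>{x. \<delta> \<le> rho x}. rho x * vmeas w x * excess L t x powr k)\<bar>
    \<le> \<delta> * (linfty_bound powr k * M / L powr r)"
proof -
  let ?f = "\<lambda>x. rho x * vmeas w x * excess L t x powr k"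
  define G where "G = {x. \<delta> \<le> rho x}"
  define F where "F = level_set L t"
  have "finite F" "finite G"
    unfolding F_def G_def using finite_level_set[OF assms(1,2)] rho_superlevel_finite[OF assms(3)] .
  have "sum ?f G = sum ?f (F \<inter> G)"
    by (rule sum.mono_neutral_right) (auto simp: \<open>finite G\<close> F_def excess_def level_set_def)
  then have diff: "energy L t - sum ?f G = sum ?f (F - G)"
    unfolding energy_def F_def[symmetric] using sum.Int_Diff[OF \<open>finite F\<close>, of ?f G] by simp
  have "?f x \<le> \<delta> * (linfty_bound powr k / L powr r) * (\<bar>u x t\<bar> powr r * vmeas w x)" if "x \<in> F - G" for x
  proof -
    have "L < u x t" "rho x < \<delta>"
      using that unfolding F_def G_def level_set_def by auto
    have "excess L t x powr k \<le> linfty_bound powr k"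
      unfolding excess_def using u_le_linfty_bound[OF assms(1), of x] \<open>L < u x t\<close> assms(2) k_ge_2
      by (intro powr_mono2) auto
    then have "?f x \<le> \<delta> * vmeas w x * linfty_bound powr k"
      using \<open>rho x < \<delta>\<close> rho_pos[of x] vmeas_pos[of x] by (intro mult_mono) auto
    also have "\<dots> \<le> \<delta> * vmeas w x * linfty_bound powr k * (\<bar>u x t\<bar> powr r / L powr r)"
    proof -
      have "1 \<le> \<bar>u x t\<bar> powr r / L powr r"
        using \<open>L < u x t\<close> assms(2) r_pos powr_mono2[of r L "\<bar>u x t\<bar>"] by simp
      moreover have "0 \<le> \<delta> * vmeas w x * linfty_bound powr k"
        using assms(3) vmeas_pos[of x] by simp
      ultimately show ?thesis
        by (metis mult_left_mono mult.right_neutral)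
    qed
    finally show ?thesis
      by (simp add: mult_ac)
  qed
  then have "sum ?f (F - G) \<le> \<delta> * (linfty_bound powr k / L powr r) * (\<Sum>x\<in>F - G. \<bar>u x t\<bar> powr r * vmeas w x)"
    unfolding sum_distrib_left by (rule sum_mono)
  also have "\<dots> \<le> \<delta> * (linfty_bound powr k / L powr r) * M"
    using lr_bound[OF assms(1)] \<open>finite F\<close> assms(3) by (intro mult_left_mono) auto
  finally have "sum ?f (F - G) \<le> \<delta> * (linfty_bound powr k * M / L powr r)"
    by simp
  moreover have "0 \<le> sum ?f (F - G)"
    by (intro sum_nonneg mult_nonneg_nonneg) (simp_all add: less_imp_le[OF rho_pos] less_imp_le[OF vmeas_pos])
  ultimately show ?thesis
    using diff unfolding G_def by simp
qed

lemma u_continuous: "continuous_on {0..T} (u x)"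
  using DERIV_continuous_on[of "{0..T}" "u x" "u' x"] u_deriv by blast

lemma energy_continuous:
  assumes "0 < L"
  shows "continuous_on {0..T} (energy L)"
proof (rule continuous_on_uniform_approximation)
  fix \<epsilon> :: real
  assume "0 < \<epsilon>"
  define B where "B = linfty_bound powr k * M / L powr r"
  have "0 \<le> B"
    unfolding B_def using lr_bound[of 0 "{}"] T_pos by simp
  define \<delta> where "\<delta> = \<epsilon> / (B + 1)"
  have "0 < \<delta>" "\<delta> * B \<le> \<epsilon>"
    unfolding \<delta>_def using \<open>0 < \<epsilon>\<close> \<open>0 \<le> B\<close> by (simp_all add: field_simps)
  show "\<exists>g. continuous_on {0..T} g \<and> (\<forall>t\<in>{0..T}. \<bar>energy L t - g t\<bar> \<le> \<epsilon>)"
  proof (intro exI conjI ballI)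
    show "continuous_on {0..T} (\<lambda>t. \<Sum>x\<in>{x. \<delta> \<le> rho x}. rho x * vmeas w x * excess L t x powr k)"
      unfolding excess_def using k_ge_2
      by (intro continuous_intros continuous_on_powr' u_continuous) auto
    fix t assume "t \<in> {0..T}"
    show "\<bar>energy L t - (\<Sum>x\<in>{x. \<delta> \<le> rho x}. rho x * vmeas w x * excess L t x powr k)\<bar> \<le> \<epsilon>"
      using energy_tail[OF \<open>t \<in> {0..T}\<close> assms \<open>0 < \<delta>\<close>] \<open>\<delta> * B \<le> \<epsilon>\<close> unfolding B_def by linarith
  qed
qed

lemma u_has_derivative_at:
  assumes "t \<in> {0<..<T}"
  shows "(u x has_real_derivative u' x t) (at t)"
  using u_deriv[of t x] assms at_within_interior[of t "{0..T}"] by simp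

lemma level_set_persists_left:
  assumes "t \<in> {0<..<T}" "0 < L"
  shows "\<forall>\<^sub>F h in at_right 0. \<forall>x\<in>level_set L t. L < u x (t - h)"
proof (rule eventually_at_right_0_of_at)
  have "finite (level_set L t)"
    using finite_level_set assms by simp
  show "\<forall>\<^sub>F s in at t. \<forall>x\<in>level_set L t. L < u x s"
  proof (rule eventually_ball_finite[OF \<open>finite (level_set L t)\<close>], rule ballI)
    fix x
    assume "x \<in> level_set L t"
    have "(u x \<longlongrightarrow> u x t) (at t)"
      using DERIV_isCont[OF u_has_derivative_at[OF assms(1)]] by (simp add: isCont_def)
    then show "\<forall>\<^sub>F s in at t. L < u x s"
      using \<open>x \<in> level_set L t\<close> unfolding level_set_def by (auto intro: order_tendstoD(1))
  qed
qed

lemma energy_left_increment: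
  assumes "t \<in> {0<..<T}" "0 < L" "0 < \<eta>"
  shows "\<forall>\<^sub>F h in at_right 0. energy L t - dissipation L t * h - \<eta> * h \<le> energy L (t - h)"
proof -
  define F where "F = level_set L t"
  have "finite F"
    unfolding F_def using finite_level_set assms(1,2) by simp
  \<comment> \<open>Near \<open>t\<close> the energy dominates the smooth sum over the level set at time \<open>t\<close>, whose derivative is
    the dissipation by the equation.\<close>
  define S where "S s = (\<Sum>x\<in>F. rho x * vmeas w x * (u x s - L) powr k)" for s
  have "(S has_real_derivative (\<Sum>x\<in>F. rho x * vmeas w x * (k * (u x t - L) powr (k - 1) * u' x t))) (at t)"
    unfolding S_def
  proof (intro DERIV_sum DERIV_cmult)
    fix x assume "x \<in> F"
    then show "((\<lambda>s. (u x s - L) powr k) has_real_derivative k * (u x t - L) powr (k - 1) * u' x t) (at t)"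
      using u_has_derivative_at[OF assms(1), of x] unfolding F_def level_set_def
      by (auto intro!: derivative_eq_intros)
  qed
  also have "(\<Sum>x\<in>F. rho x * vmeas w x * (k * (u x t - L) powr (k - 1) * u' x t)) = dissipation L t"
    unfolding dissipation_def F_def[symmetric]
    by (intro sum.cong refl) (simp add: F_def level_set_def excess_def equation[OF assms(1)] algebra_simps)
  finally have S_deriv: "(S has_real_derivative dissipation L t) (at t)" .
  have "\<forall>\<^sub>F h in at_right 0. h < t"
    unfolding eventually_at_right_field using assms(1) by (intro exI[of _ t]) auto
  with level_set_persists_left[OF assms(1,2)] eventually_at_right_less[of 0]
  have near: "\<forall>\<^sub>F h in at_right 0. S (t - h) \<le> energy L (t - h)"
  proof eventually_elim
    case (elim h)
    then have "t - h \<in> {0..T}"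
      using assms(1) by auto
    have "S (t - h) = (\<Sum>x\<in>F. rho x * vmeas w x * excess L (t - h) x powr k)"
      unfolding S_def excess_def using elim(1) unfolding F_def by (intro sum.cong refl) auto
    also have "\<dots> \<le> energy L (t - h)"
      using sum_le_energy[OF \<open>t - h \<in> {0..T}\<close> assms(2) \<open>finite F\<close>] .
    finally show ?case .
  qed
  have "S t = energy L t"
    unfolding S_def energy_def F_def excess_def level_set_def by (intro sum.cong refl) auto
  from near has_real_derivative_left_increment[OF S_deriv assms(3)] show ?thesis
  proof eventually_elim
    case (elim h)
    then show ?case
      using \<open>S t = energy L t\<close> unfolding abs_le_iff by linarith
  qed
qed

lemma dissipation_le_dirichlet:
  assumes "t \<in> {0..T}" "0 < L"
  shows "dissipation L t \<le> - (pairing_const / 4) * dirichlet_energy w p (\<lambda>x. excess L t x powr \<gamma>)"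
proof -
  have "dissipation L t = (\<Sum>x\<in>{x. L < u x t}. k * excess L t x powr (k - 1) *
      (\<Sum>\<^sub>\<infinity>y. \<bar>u y t - u x t\<bar> powr (p - 2) * (u y t - u x t) * w x y))"
    unfolding dissipation_def level_set_def plap_def
    by (intro sum.cong refl) (simp add: dual_order.strict_implies_not_eq[OF vmeas_pos])
  also have "\<dots> \<le> - (pairing_const / 4) * dirichlet_energy w p (\<lambda>x. excess L t x powr \<gamma>)"
    using truncated_power_pairing[OF w_sym w_nonneg w_summable, of "\<lambda>x. u x t" linfty_bound L k p]
      u_nonneg u_le_linfty_bound[OF assms(1)] finite_level_set[OF assms] assms(1) k_ge_2 p_gt_2
    unfolding pairing_const_def \<gamma>_def level_set_def excess_def[abs_def] by simp
  finally show ?thesis .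
qed

lemma dissipation_nonpos:
  assumes "t \<in> {0..T}" "0 < L"
  shows "dissipation L t \<le> 0"
proof -
  have "0 \<le> pairing_const / 4 * dirichlet_energy w p (\<lambda>x. excess L t x powr \<gamma>)"
    using pairing_const_pos dirichlet_nonneg by simp
  then show ?thesis
    using dissipation_le_dirichlet[OF assms] by linarith
qed

lemma sobolev_level_set:
  assumes "t \<in> {0..T}" "0 < L"
  shows "(\<Sum>x\<in>level_set L t. (excess L t x powr \<gamma>) powr ps * vmeas w x) powr (1 / ps)
    \<le> CS * dirichlet_energy w p (\<lambda>x. excess L t x powr \<gamma>) powr (1 / p)"
  using sobolev[OF finite_level_set[OF assms], of "\<lambda>x. excess L t x powr \<gamma>"]
  by (simp add: level_set_def excess_def)

lemma energy_le_holder: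
  assumes "t \<in> {0..T}" "0 < L"
  shows "energy L t \<le> A powr (1 / e) *
    (\<Sum>x\<in>level_set L t. (excess L t x powr \<gamma>) powr ps * vmeas w x) powr (1 / e_conj)"
proof -
  have "energy L t = (\<Sum>x\<in>level_set L t. rho x * excess L t x powr k * vmeas w x)"
    unfolding energy_def by (simp add: mult_ac)
  also have "\<dots> \<le> (\<Sum>x\<in>level_set L t. rho x powr e * vmeas w x) powr (1 / e) *
      (\<Sum>x\<in>level_set L t. (excess L t x powr k) powr e_conj * vmeas w x) powr (1 / e_conj)"
    using finite_level_set[OF assms] e_gt_1 e_conj_conjugate rho_pos vmeas_pos
    by (intro holder_inequality_weighted_sum) (auto intro: less_imp_le)
  also have "(\<Sum>x\<in>level_set L t. (excess L t x powr k) powr e_conj * vmeas w x) =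
      (\<Sum>x\<in>level_set L t. (excess L t x powr \<gamma>) powr ps * vmeas w x)"
  proof -
    have "k * e_conj = \<gamma> * ps"
      unfolding e_conj_def using k_ge_2 by simp
    then show ?thesis
      by (simp add: powr_powr)
  qed
  also have "(\<Sum>x\<in>level_set L t. rho x powr e * vmeas w x) powr (1 / e) \<le> A powr (1 / e)"
    using weight_bound[OF finite_level_set[OF assms]] e_gt_1
    by (intro powr_mono2 sum_nonneg mult_nonneg_nonneg) (simp_all add: less_imp_le[OF vmeas_pos])
  finally show ?thesis
    by (simp add: mult_right_mono)
qed

lemma dissipation_le_energy_power:
  assumes "t \<in> {0..T}" "0 < L"
  shows "dissipation L t \<le> - decay_const * energy L t powr \<alpha>"
proof -
  define P where "P = dirichlet_energy w p (\<lambda>x. excess L t x powr \<gamma>)"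
  define Q where "Q = (\<Sum>x\<in>level_set L t. (excess L t x powr \<gamma>) powr ps * vmeas w x)"
  have "0 \<le> P"
    unfolding P_def by (rule dirichlet_nonneg)
  have "0 < \<alpha>"
    using alpha_gt_1 by simp
  have "energy L t powr \<alpha> \<le> (A powr (1 / e) * Q powr (1 / e_conj)) powr \<alpha>"
    unfolding Q_def using energy_le_holder[OF assms] energy_nonneg \<open>0 < \<alpha>\<close> by (intro powr_mono2) auto
  also have "\<dots> = A powr (\<alpha> / e) * (Q powr (1 / ps)) powr p"
    using alpha_div_e_conj by (simp add: powr_mult powr_powr)
  also have "\<dots> \<le> A powr (\<alpha> / e) * (CS * P powr (1 / p)) powr p"
    using sobolev_level_set[OF assms] p_gt_2 unfolding P_def Q_def
    by (intro mult_left_mono powr_mono2) auto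
  also have "\<dots> = A powr (\<alpha> / e) * CS powr p * P"
    using \<open>0 \<le> P\<close> CS_pos p_gt_2 by (simp add: powr_mult powr_powr)
  finally have "decay_const * energy L t powr \<alpha> \<le> decay_const * (A powr (\<alpha> / e) * CS powr p * P)"
    using decay_const_pos by simp
  also have "\<dots> = pairing_const / 4 * P"
    unfolding decay_const_def using A_pos CS_pos by simp
  finally have "decay_const * energy L t powr \<alpha> \<le> pairing_const / 4 * P" .
  then show ?thesis
    using dissipation_le_dirichlet[OF assms] unfolding P_def by linarith
qed

lemma energy_decrease:
  assumes "0 \<le> a" "a \<le> b" "b < T" "0 < L"
    and below: "\<And>t. t \<in> {a<..b} \<Longrightarrow> dissipation L t < - K"
  shows "energy L b \<le> energy L a - K * (b - a)"
proof (rule decrease_from_left_dini[OF \<open>a \<le> b\<close>])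
  show "continuous_on {a..b} (energy L)"
    using energy_continuous[OF \<open>0 < L\<close>] by (rule continuous_on_subset) (use assms in auto)
  fix t
  assume "t \<in> {a<..b}"
  then have "t \<in> {0<..<T}"
    using assms by auto
  define \<eta> where "\<eta> = (- dissipation L t - K) / 2"
  have "0 < \<eta>"
    unfolding \<eta>_def using below[OF \<open>t \<in> {a<..b}\<close>] by simp
  from energy_left_increment[OF \<open>t \<in> {0<..<T}\<close> \<open>0 < L\<close> this] eventually_at_right_less[of 0]
  show "\<forall>\<^sub>F h in at_right 0. energy L t + K * h < energy L (t - h)"
  proof eventually_elim
    case (elim h)
    have "K < - dissipation L t - \<eta>"
      unfolding \<eta>_def using below[OF \<open>t \<in> {a<..b}\<close>] by (simp add: field_simps)
    then have "K * h < (- dissipation L t - \<eta>) * h"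
      using elim(2) by (rule mult_strict_right_mono)
    then show ?case
      using elim(1) by (simp add: algebra_simps)
  qed
qed

lemma energy_antimono:
  assumes "0 \<le> a" "a \<le> b" "b < T" "0 < L"
  shows "energy L b \<le> energy L a"
proof (rule field_le_epsilon)
  fix \<epsilon> :: real
  assume "0 < \<epsilon>"
  define d where "d = \<epsilon> / (b - a + 1)"
  have "0 < d" "d * (b - a) \<le> \<epsilon>"
    unfolding d_def using \<open>0 < \<epsilon>\<close> \<open>a \<le> b\<close> by (simp_all add: field_simps)
  have "energy L b \<le> energy L a - (- d) * (b - a)"
  proof (rule energy_decrease[OF assms])
    fix t
    assume "t \<in> {a<..b}"
    then have "t \<in> {0..T}"
      using assms by auto
    then show "dissipation L t < - (- d)"
      using dissipation_nonpos[OF _ \<open>0 < L\<close>] \<open>0 < d\<close> by fastforce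
  qed
  with \<open>d * (b - a) \<le> \<epsilon>\<close> show "energy L b \<le> energy L a + \<epsilon>"
    by simp
qed

lemma energy_power_decay:
  assumes "0 < t" "t < T" "0 < L"
  shows "energy L t \<le> (decay_const * (\<alpha> - 1) * t / 4) powr (- 1 / (\<alpha> - 1))"
proof -
  have "energy L t \<le> (decay_const / 2 * (\<alpha> - 1) * t / 2) powr (- 1 / (\<alpha> - 1))"
  proof (rule power_decay_from_left_dini[OF \<open>0 < t\<close> _ alpha_gt_1])
    show "0 < decay_const / 2"
      using decay_const_pos by simp
    show "continuous_on {0..t} (energy L)"
      using energy_continuous[OF \<open>0 < L\<close>] by (rule continuous_on_subset) (use assms in auto)
    show "\<And>s. s \<in> {0..t} \<Longrightarrow> 0 \<le> energy L s"
      by (rule energy_nonneg)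
    fix s
    assume "s \<in> {0<..t}" "0 < energy L s"
    then have "s \<in> {0<..<T}"
      using assms by auto
    have "0 < decay_const / 2 * energy L s powr \<alpha>"
      using decay_const_pos \<open>0 < energy L s\<close> by simp
    from energy_left_increment[OF \<open>s \<in> {0<..<T}\<close> \<open>0 < L\<close> this] eventually_at_right_less[of 0]
    show "\<forall>\<^sub>F h in at_right 0. energy L s + decay_const / 2 * energy L s powr \<alpha> * h \<le> energy L (s - h)"
    proof eventually_elim
      case (elim h)
      have "dissipation L s * h \<le> - decay_const * energy L s powr \<alpha> * h"
        using dissipation_le_energy_power[of s L] \<open>s \<in> {0<..<T}\<close> \<open>0 < L\<close> elim(2)
        by (intro mult_right_mono) auto
      with elim(1) show ?case
        by (simp add: algebra_simps)
    qed
  qed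
  then show ?thesis
    by (simp add: mult_ac)
qed

lemma dissipation_bounded_below_somewhere:
  assumes "0 \<le> a" "a < b" "b < T" "0 < L" "energy L a \<le> \<Phi>" "0 < \<Phi>"
  obtains \<tau> where "\<tau> \<in> {a<..b}" "- (2 * \<Phi> / (b - a)) \<le> dissipation L \<tau>"
proof -
  have "\<exists>\<tau>\<in>{a<..b}. - (2 * \<Phi> / (b - a)) \<le> dissipation L \<tau>"
  proof (rule ccontr)
    assume "\<not> ?thesis"
    then have "energy L b \<le> energy L a - 2 * \<Phi> / (b - a) * (b - a)"
      using assms(1-4) by (intro energy_decrease) force+
    then have "energy L b \<le> energy L a - 2 * \<Phi>"
      using \<open>a < b\<close> by simp
    with assms(5,6) energy_nonneg[of L b] show False
      by linarith
  qed
  with that show thesis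
    by blast
qed

lemma excess_le_dirichlet:
  assumes "t \<in> {0..T}" "0 < L"
  shows "u y t - L \<le> sobolev_sup_const * dirichlet_energy w p (\<lambda>x. excess L t x powr \<gamma>) powr (1 / (\<gamma> * p))"
proof (cases "L < u y t")
  case False
  have "0 \<le> sobolev_sup_const * dirichlet_energy w p (\<lambda>x. excess L t x powr \<gamma>) powr (1 / (\<gamma> * p))"
    unfolding sobolev_sup_const_def by simp
  with False show ?thesis
    by linarith
next
  case True
  define P where "P = dirichlet_energy w p (\<lambda>x. excess L t x powr \<gamma>)"
  define v where "v = u y t - L"
  have "0 < v" "0 < \<gamma> * ps"
    unfolding v_def using True gamma_ge_1 ps_pos by simp_all
  have "0 \<le> P"
    unfolding P_def by (rule dirichlet_nonneg)
  have "v powr (\<gamma> * ps) * cm \<le> (excess L t y powr \<gamma>) powr ps * vmeas w y"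
    using \<open>0 < v\<close> vmeas_ge[of y] unfolding v_def excess_def by (simp add: powr_powr mult_left_mono)
  also have "\<dots> \<le> (\<Sum>x\<in>level_set L t. (excess L t x powr \<gamma>) powr ps * vmeas w x)"
    using True finite_level_set[OF assms]
    by (intro member_le_sum) (auto simp: level_set_def less_imp_le[OF vmeas_pos])
  also have "\<dots> \<le> (CS * P powr (1 / p)) powr ps"
  proof -
    let ?Q = "\<Sum>x\<in>level_set L t. (excess L t x powr \<gamma>) powr ps * vmeas w x"
    have "0 \<le> ?Q"
      by (intro sum_nonneg mult_nonneg_nonneg) (simp_all add: less_imp_le[OF vmeas_pos])
    have "(?Q powr (1 / ps)) powr ps \<le> (CS * P powr (1 / p)) powr ps"
      using sobolev_level_set[OF assms] ps_pos unfolding P_def by (intro powr_mono2) auto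
    then show ?thesis
      using \<open>0 \<le> ?Q\<close> ps_pos by (simp add: powr_powr)
  qed
  finally have "v powr (\<gamma> * ps) \<le> (CS * P powr (1 / p)) powr ps / cm"
    using cm_pos by (simp add: field_simps)
  then have "(v powr (\<gamma> * ps)) powr (1 / (\<gamma> * ps)) \<le> ((CS * P powr (1 / p)) powr ps / cm) powr (1 / (\<gamma> * ps))"
    using \<open>0 < \<gamma> * ps\<close> by (intro powr_mono2) auto
  then show ?thesis
    using \<open>0 < v\<close> gamma_ge_1 ps_pos sobolev_sup_const_eq[OF \<open>0 \<le> P\<close>] unfolding v_def P_def
    by (simp add: powr_powr)
qed

lemma sup_bound_from_dissipation:
  assumes "t \<in> {0..T}" "0 < L" "- K \<le> dissipation L t"
  shows "u y t \<le> L + sobolev_sup_const * (4 * K / pairing_const) powr (1 / (\<gamma> * p))"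
proof -
  define P where "P = dirichlet_energy w p (\<lambda>x. excess L t x powr \<gamma>)"
  have "pairing_const / 4 * P \<le> K"
    using dissipation_le_dirichlet[OF assms(1,2)] assms(3) unfolding P_def by linarith
  then have "P \<le> 4 * K / pairing_const"
    using pairing_const_pos by (simp add: field_simps)
  then have "sobolev_sup_const * P powr (1 / (\<gamma> * p)) \<le> sobolev_sup_const * (4 * K / pairing_const) powr (1 / (\<gamma> * p))"
    unfolding sobolev_sup_const_def P_def using gamma_ge_1 p_gt_2 dirichlet_nonneg
    by (intro mult_left_mono powr_mono2) auto
  with excess_le_dirichlet[OF assms(1,2), of y] show ?thesis
    unfolding P_def by linarith
qed

lemma maximum_principle:
  assumes "0 \<le> \<tau>" "\<tau> \<le> t" "t < T" "0 < L" and below: "\<And>y. u y \<tau> \<le> L"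
  shows "u x t \<le> L"
proof (rule ccontr)
  assume "\<not> u x t \<le> L"
  then have "0 < rho x * vmeas w x * excess L t x powr k"
    using rho_pos[of x] vmeas_pos[of x] by (simp add: excess_def)
  also have "\<dots> \<le> energy L t"
    using sum_le_energy[of t L "{x}"] assms(1-4) by simp
  also have "\<dots> \<le> energy L \<tau>"
    using energy_antimono assms(1-4) by simp
  also have "energy L \<tau> = 0"
  proof -
    have "level_set L \<tau> = {}"
      using below by (auto simp: level_set_def not_less)
    then show ?thesis
      unfolding energy_def by simp
  qed
  finally show False
    by simp
qed

lemma sup_decay:
  assumes "0 < t" "t < T"
  shows "u x t \<le> sup_decay_const * t powr (- 1 / (p - 2))"
proof -
  define \<Phi> where "\<Phi> = (decay_const * (\<alpha> - 1) * (t / 2) / 4) powr (- 1 / (\<alpha> - 1))"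
  define \<Psi> where "\<Psi> = sobolev_sup_const * (16 * \<Phi> / (pairing_const * t)) powr (1 / (\<gamma> * p))"
  have "0 < \<Phi>" "0 \<le> \<Psi>"
    unfolding \<Phi>_def \<Psi>_def sobolev_sup_const_def using decay_const_pos alpha_gt_1 assms(1) by simp_all
  have "u x t \<le> \<Psi> + \<epsilon>" if "0 < \<epsilon>" for \<epsilon>
  proof -
    have "energy \<epsilon> (t / 2) \<le> \<Phi>"
      unfolding \<Phi>_def using energy_power_decay[of "t / 2" \<epsilon>] assms that by simp
    moreover have "0 \<le> t / 2" "t / 2 < t"
      using assms(1) by simp_all
    ultimately obtain \<tau> where \<tau>: "\<tau> \<in> {t / 2<..t}" "- (2 * \<Phi> / (t - t / 2)) \<le> dissipation \<epsilon> \<tau>"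
      using dissipation_bounded_below_somewhere[of "t / 2" t \<epsilon> \<Phi>] assms(2) \<open>0 < \<epsilon>\<close> \<open>0 < \<Phi>\<close> by blast
    then have "\<tau> \<in> {0..T}"
      using assms by auto
    have "4 * (2 * \<Phi> / (t - t / 2)) / pairing_const = 16 * \<Phi> / (pairing_const * t)"
      by (simp add: field_simps)
    then have "u y \<tau> \<le> \<Psi> + \<epsilon>" for y
      using sup_bound_from_dissipation[OF \<open>\<tau> \<in> {0..T}\<close> that \<tau>(2), of y] unfolding \<Psi>_def
      by (simp add: ac_simps)
    then show ?thesis
      using maximum_principle[of \<tau> t "\<Psi> + \<epsilon>" x] \<tau>(1) assms that \<open>0 \<le> \<Psi>\<close> by simp
  qed
  then have "u x t \<le> \<Psi>"
    by (rule field_le_epsilon)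
  also have "\<Psi> = sup_decay_const * t powr (- 1 / (p - 2))"
    unfolding \<Psi>_def \<Phi>_def using sup_decay_const_scaling[OF assms(1)] .
  finally show ?thesis .
qed

end

lemma sobolev_positive_constant:
  assumes "sobolev w N p"
  obtains CS where "0 < CS"
    and "\<And>U f. finite U \<Longrightarrow> (\<And>x. x \<notin> U \<Longrightarrow> f x = 0) \<Longrightarrow>
      (\<Sum>x\<in>U. \<bar>f x\<bar> powr (N * p / (N - p)) * vmeas w x) powr (1 / (N * p / (N - p)))
        \<le> CS * dirichlet_energy w p f powr (1 / p)"
proof -
  obtain C where C: "\<And>U f. finite U \<Longrightarrow> (\<forall>x. x \<notin> U \<longrightarrow> f x = 0) \<Longrightarrow>
      (\<Sum>x\<in>U. \<bar>f x\<bar> powr (N * p / (N - p)) * vmeas w x) powr (1 / (N * p / (N - p)))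
        \<le> C * dirichlet_energy w p f powr (1 / p)"
    using assms unfolding sobolev_def dirichlet_energy_def by blast
  show thesis
  proof (rule that[of "max C 1"])
    fix U and f :: "'a \<Rightarrow> real"
    assume "finite U" "\<And>x. x \<notin> U \<Longrightarrow> f x = 0"
    then have "(\<Sum>x\<in>U. \<bar>f x\<bar> powr (N * p / (N - p)) * vmeas w x) powr (1 / (N * p / (N - p)))
        \<le> C * dirichlet_energy w p f powr (1 / p)"
      using C by blast
    also have "\<dots> \<le> max C 1 * dirichlet_energy w p f powr (1 / p)"
      by (intro mult_right_mono) auto
    finally show "(\<Sum>x\<in>U. \<bar>f x\<bar> powr (N * p / (N - p)) * vmeas w x) powr (1 / (N * p / (N - p)))
        \<le> max C 1 * dirichlet_energy w p f powr (1 / p)" .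
  qed simp
qed

lemma weight_exponent_conjugate:
  fixes N p \<nu> :: real
  assumes "2 < p" "p < N" "0 \<le> \<nu>"
  defines "e \<equiv> N * (p - 1 + \<nu>) / ((N * (p - 2) + p) + p * \<nu>)"
  shows "1 < e" and "1 / e + (\<nu> + 1) * p / ((\<nu> + 1 + p - 2) * (N * p / (N - p))) = 1"
proof -
  have "0 < (N * (p - 2) + p) + p * \<nu>"
    using assms(1-3) by (simp add: add_pos_nonneg)
  moreover have "(N * (p - 2) + p) + p * \<nu> < N * (p - 1 + \<nu>)"
    using mult_strict_right_mono[OF assms(2), of "1 + \<nu>"] assms(3) by (simp add: algebra_simps)
  ultimately show "1 < e"
    unfolding e_def by simp
  have "(\<nu> + 1) * p / ((\<nu> + 1 + p - 2) * (N * p / (N - p))) = (\<nu> + 1) * (N - p) / (N * (p - 1 + \<nu>))"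
  proof -
    have "(\<nu> + 1) * p / ((\<nu> + 1 + p - 2) * (N * p / (N - p)))
        = (p * ((\<nu> + 1) * (N - p))) / (p * (N * (p - 1 + \<nu>)))"
      by (simp add: algebra_simps)
    also have "\<dots> = (\<nu> + 1) * (N - p) / (N * (p - 1 + \<nu>))"
      using assms(1) by (intro nonzero_mult_divide_mult_cancel_left) simp
    finally show ?thesis .
  qed
  moreover have "1 / e = ((N * (p - 2) + p) + p * \<nu>) / (N * (p - 1 + \<nu>))"
    unfolding e_def by simp
  ultimately have "1 / e + (\<nu> + 1) * p / ((\<nu> + 1 + p - 2) * (N * p / (N - p)))
      = (((N * (p - 2) + p) + p * \<nu>) + (\<nu> + 1) * (N - p)) / (N * (p - 1 + \<nu>))"
    by (simp only: add_divide_distrib)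
  also have "((N * (p - 2) + p) + p * \<nu>) + (\<nu> + 1) * (N - p) = N * (p - 1 + \<nu>)"
    by (simp add: algebra_simps)
  finally show "1 / e + (\<nu> + 1) * p / ((\<nu> + 1 + p - 2) * (N * p / (N - p))) = 1"
    using assms(1-3) by simp
qed

lemma is_solution_imp_plap_solution:
  assumes "plap_setting w rho p k cm CS ps e A" and "is_solution w p rho u T" "0 < T"
    and "\<And>x t. 0 \<le> t \<Longrightarrow> 0 \<le> u x t"
  obtains u' r M where "plap_solution w rho p k cm CS ps e A u u' T r M"
proof -
  obtain r M where "1 \<le> r"
    and lr: "\<And>t. t \<in> {0..T} \<Longrightarrow> (\<lambda>x. \<bar>u x t\<bar> powr r * vmeas w x) summable_on UNIV \<and>
      (\<Sum>\<^sub>\<infinity>x. \<bar>u x t\<bar> powr r * vmeas w x) \<le> M"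
    using assms(2) unfolding is_solution_def by blast
  obtain u' where u': "\<And>x. (\<forall>t\<in>{0..T}. (u x has_real_derivative u' x t) (at t within {0..T})) \<and>
      (\<forall>t\<in>{0<..<T}. rho x * u' x t - plap w p (\<lambda>y. u y t) x = 0)"
    using assms(2) unfolding is_solution_def by metis
  have "(\<Sum>x\<in>F. \<bar>u x t\<bar> powr r * vmeas w x) \<le> M" if "t \<in> {0..T}" "finite F" for t F
  proof -
    have "0 \<le> vmeas w x" for x
      using plap_setting.vmeas_pos[OF assms(1)] less_imp_le by blast
    then have "(\<Sum>x\<in>F. \<bar>u x t\<bar> powr r * vmeas w x) \<le> (\<Sum>\<^sub>\<infinity>x. \<bar>u x t\<bar> powr r * vmeas w x)"
      using lr[OF that(1)] that(2) by (intro finite_sum_le_infsum) auto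
    with lr[OF that(1)] show ?thesis
      by simp
  qed
  then have "plap_solution w rho p k cm CS ps e A u u' T r M"
    using assms(3,4) \<open>1 \<le> r\<close> u'
    by (intro plap_solution.intro[OF assms(1)] plap_solution_axioms.intro) auto
  then show thesis
    by (rule that)
qed

lemma plap_setting_from_hypotheses:
  fixes w :: "'v \<Rightarrow> 'v \<Rightarrow> real" and rho :: "'v \<Rightarrow> real" and N p \<nu> :: real
  defines "e \<equiv> N * (p - 1 + \<nu>) / ((N * (p - 2) + p) + p * \<nu>)"
  assumes p: "2 < p" "p < N" and graph: "weighted_graph w" and inf_pos: "0 < (INF x. vmeas w x)"
    and sob: "sobolev w N p" and rho_pos: "\<And>x. 0 < rho x" and "1 \<le> \<nu>" and summable: "(\<lambda>x. rho x powr e * vmeas w x) summable_on UNIV"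
  obtains CS where "plap_setting w rho p (\<nu> + 1) (INF x. vmeas w x) CS (N * p / (N - p)) e
    (\<Sum>\<^sub>\<infinity>x. rho x powr e * vmeas w x)"
proof -
  have w: "\<And>x y. w x y = w y x" "\<And>x y. 0 \<le> w x y" "\<And>x. w x summable_on UNIV"
    using graph unfolding weighted_graph_def by auto
  have vmeas_ge: "(INF x. vmeas w x) \<le> vmeas w x" for x
    using w(2) by (intro cINF_lower bdd_belowI2[of _ 0]) (auto simp: vmeas_def intro: infsum_nonneg)
  with inf_pos have "0 \<le> vmeas w x" for x
    by (meson less_imp_le order_trans)
  with summable have weight_bound: "(\<Sum>x\<in>G. rho x powr e * vmeas w x) \<le> (\<Sum>\<^sub>\<infinity>x. rho x powr e * vmeas w x)"
    if "finite G" for G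
    using that by (intro finite_sum_le_infsum) auto
  obtain CS where "0 < CS" and sobolev: "\<And>U f. finite U \<Longrightarrow> (\<And>x. x \<notin> U \<Longrightarrow> f x = 0) \<Longrightarrow>
      (\<Sum>x\<in>U. \<bar>f x\<bar> powr (N * p / (N - p)) * vmeas w x) powr (1 / (N * p / (N - p)))
        \<le> CS * dirichlet_energy w p f powr (1 / p)"
    using sobolev_positive_constant[OF sob] by blast
  have "plap_setting w rho p (\<nu> + 1) (INF x. vmeas w x) CS (N * p / (N - p)) e (\<Sum>\<^sub>\<infinity>x. rho x powr e * vmeas w x)"
    using w vmeas_ge p inf_pos rho_pos \<open>1 \<le> \<nu>\<close> \<open>0 < CS\<close> sobolev weight_bound
      weight_exponent_conjugate[OF p, of \<nu>]
    unfolding e_def by unfold_locales (auto simp: field_simps)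
  then show thesis
    by (rule that)
qed

lemma uniform_decay:
  fixes w :: "'v \<Rightarrow> 'v \<Rightarrow> real" and rho :: "'v \<Rightarrow> real"
  assumes "2 < p" "p < N" "weighted_graph w" "0 < (INF x. vmeas w x)" "sobolev w N p"
    and "\<And>x. 0 < rho x" "1 \<le> \<nu>"
    and "(\<lambda>x. rho x powr (N * (p - 1 + \<nu>) / ((N * (p - 2) + p) + p * \<nu>)) * vmeas w x) summable_on UNIV"
  shows "\<exists>C. \<forall>u. (\<forall>x t. 0 \<le> t \<longrightarrow> 0 \<le> u x t) \<longrightarrow> (\<forall>T > 0. is_solution w p rho u T) \<longrightarrow>
    (\<forall>t > 0. \<forall>x. \<bar>u x t\<bar> \<le> C * t powr (- 1 / (p - 2)))"
proof -
  define e where "e = N * (p - 1 + \<nu>) / ((N * (p - 2) + p) + p * \<nu>)"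
  define A where "A = (\<Sum>\<^sub>\<infinity>x. rho x powr e * vmeas w x)"
  obtain CS where setting: "plap_setting w rho p (\<nu> + 1) (INF x. vmeas w x) CS (N * p / (N - p)) e A"
    using plap_setting_from_hypotheses[OF assms] unfolding e_def A_def by blast
  interpret plap_setting w rho p "\<nu> + 1" "INF x. vmeas w x" CS "N * p / (N - p)" e A
    by (rule setting)
  show ?thesis
  proof (intro exI[of _ sup_decay_const] allI impI)
    fix u :: "'v \<Rightarrow> real \<Rightarrow> real" and t :: real and x :: 'v
    assume u_nonneg: "\<forall>x t. 0 \<le> t \<longrightarrow> 0 \<le> u x t"
      and "\<forall>T > 0. is_solution w p rho u T" and "0 < t"
    then have "is_solution w p rho u (2 * t)"
      by simp
    then obtain u' r M where "plap_solution w rho p (\<nu> + 1) (INF x. vmeas w x) CS (N * p / (N - p)) e A u u' (2 * t) r M"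
      using is_solution_imp_plap_solution[OF setting] \<open>0 < t\<close> u_nonneg by (metis mult_pos_pos zero_less_numeral)
    then have "u x t \<le> sup_decay_const * t powr (- 1 / (p - 2))"
      using \<open>0 < t\<close> by (intro plap_solution.sup_decay) auto
    with u_nonneg \<open>0 < t\<close> show "\<bar>u x t\<bar> \<le> sup_decay_const * t powr (- 1 / (p - 2))"
      by simp
  qed
qed

text \<open>
  The witness \<open>\<nu>0 = 1\<close> makes the test exponent \<open>\<nu> + 1\<close> at least 2, as
  \<open>power_difference_inequality\<close> requires.
\<close>

theorem theorem1p2:
  fixes w :: "'v \<Rightarrow> 'v \<Rightarrow> real" and x0 :: 'v and p N :: real and rho0 :: "nat \<Rightarrow> real"
  assumes "2 < p" and "p < N"
    and "weighted_graph w"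
    and "bdd_above (range (vmeas w))" and "(INF x. vmeas w x) > 0"
    and "sobolev w N p"
    and "\<forall>n. rho0 n > 0" and "antimono rho0" and "\<forall>n. rho0 n \<le> 1"
  shows "\<exists>\<nu>0 > 0. \<forall>\<nu> \<ge> \<nu>0.
     (\<lambda>x. rho0 (gdist w x0 x) powr (N * (p - 1 + \<nu>) / ((N * (p - 2) + p) + p * \<nu>)) * vmeas w x)
        summable_on UNIV \<longrightarrow>
     (\<exists>C. \<forall>u :: 'v \<Rightarrow> real \<Rightarrow> real.
        (\<forall>x t. t \<ge> 0 \<longrightarrow> u x t \<ge> 0) \<longrightarrow>
        (\<forall>T > 0. is_solution w p (\<lambda>x. rho0 (gdist w x0 x)) u T) \<longrightarrow>
        (\<forall>t > 0. \<forall>x. \<bar>u x t\<bar> \<le> C * t powr (- 1 / (p - 2))))"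
proof (rule exI[of _ 1], intro conjI allI impI uniform_decay[OF assms(1-3,5,6)])
  show "0 < rho0 (gdist w x0 x)" for x
    using assms(7) by simp
qed auto

end
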